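(* Let $E=[-1,1]$, $D=\widehat{\mathbb C}\setminus E$, let $F\subset\mathbb R\setminus E$ be compact, let $\mu$ be a probability measure on $F$, and set $$v(z;\mu):=\int\log|1-\varphi(z)\varphi(t)|\,d\mu(t),\quad z\in D.$$ Then $$v(z;\mu)=-\frac12U^{\beta_E(\mu)+\tau_E}(z)+\mathrm{const}.$$
   Context: $\varphi(z)=z+(z^2-1)^{1/2}$ with the branch $(z^2-1)^{1/2}/z\to1$ as $z\to\infty$ (real-valued on $\mathbb R\setminus E$). $U^\nu(z)=\int\log\frac1{|z-t|}\,d\nu(t)$ is the logarithmic potential, $\beta_E(\mu)$ is the balayage of $\mu$ from $D$ onto $E$, and $\tau_E=\frac1\pi\frac{dx}{\sqrt{1-x^2}}$ is the Chebyshev (equilibrium) measure of $E$. *)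

theory Defs
  imports "HOL-Probability.Probability"
begin

definition E_int :: "complex set" where
  "E_int = complex_of_real ` {-1..1}"

text \<open>phi(z) = z + (z^2-1)^(1/2), with the branch of (z^2-1)^(1/2) that behaves like z
  at infinity; on C minus [-1,1] this branch is csqrt(z-1) * csqrt(z+1).\<close>
definition phi :: "complex \<Rightarrow> complex" where
  "phi z = z + csqrt (z - 1) * csqrt (z + 1)"

definition log_potential :: "complex measure \<Rightarrow> complex \<Rightarrow> real" where
  "log_potential \<nu> z = (\<integral>t. ln (1 / cmod (z - t)) \<partial>\<nu>)"

definition measure_add :: "'a measure \<Rightarrow> 'a measure \<Rightarrow> 'a measure" where
  "measure_add M N = measure_of (space M) (sets M) (\<lambda>A. emeasure M A + emeasure N A)"

definition tau_E :: "complex measure" where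
  "tau_E = distr (density lborel (\<lambda>x. ennreal (indicator {-1<..<1} x / (pi * sqrt (1 - x\<^sup>2)))))
                 borel complex_of_real"

text \<open>nu is the balayage of mu onto E (out of the unbounded domain D = complement of E):
  a finite Borel measure supported on E with the same total mass as mu, whose potential
  is finite on E and equals the potential of mu up to an additive constant on E
  (E = [-1,1] is regular, so the equality holds everywhere on E).\<close>
definition balayage_onto :: "complex set \<Rightarrow> complex measure \<Rightarrow> complex measure \<Rightarrow> bool" where
  "balayage_onto E \<mu> \<nu> \<longleftrightarrow>
     sets \<nu> = sets borel \<and> finite_measure \<nu> \<and> emeasure \<nu> (UNIV - E) = 0 \<and>
     emeasure \<nu> UNIV = emeasure \<mu> UNIV \<and>
     (\<forall>x\<in>E. integrable \<nu> (\<lambda>t. ln (1 / cmod (x - t)))) \<and>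
     (\<exists>c. \<forall>x\<in>E. log_potential \<nu> x = log_potential \<mu> x + c)"

definition v_pot :: "complex measure \<Rightarrow> complex \<Rightarrow> real" where
  "v_pot \<mu> z = (\<integral>t. ln (cmod (1 - phi z * phi t)) \<partial>\<mu>)"

end

theory Submission
  imports Defs "HOL-Real_Asymp.Real_Asymp"
begin

text \<open>Put q = 1 / phi z. Off E the conformal map phi gives the expansion
  ln |z - cos x| = ln |phi z| - ln 2 - sum_n (2 / n) Re (q^n) cos (n x), and for real t outside E
  ln |1 - 1 / (phi z phi t)| = - sum_n (1 / n) Re (q^n) Re (phi t^-n).
  Integrating the first expansion against a measure carried by E turns cos (n x) into Chebyshev
  polynomials, so the potential of the balayage nu off E is determined by its Chebyshev moments.
  Testing the identity U^nu = U^mu + c on E against cos (n x) over the arc x in [-pi, 0] (Fourier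
  coefficients of the kernel ln |cos x - cos theta|, obtained from its Abel means) shows that the
  n-th Chebyshev moment of nu equals the mu-integral of Re (phi t^-n). Summing the series gives
  U^nu (z) = ln 2 - ln |phi z| - 2 int ln |1 - 1 / (phi z phi t)| dmu(t), while U^tau_E (z) =
  ln 2 - ln |phi z|; comparing with v(z; mu) yields the claim with
  C = ln 2 + int ln |phi t| dmu(t).\<close>

section \<open>Logarithmic series and termwise integration\<close>

lemma ln_norm_one_minus_sums:
  fixes u :: complex
  assumes "norm u < 1"
  shows "(\<lambda>n. Re (u ^ n) / real n) sums - ln (norm (1 - u))"
proof -
  have "(\<lambda>n. - (u ^ n) / of_nat n) sums Ln (1 - u)"
    using Ln_series'[of "- u"] assms by simp
  from sums_Re[OF this] have "(\<lambda>n. - (Re (u ^ n) / real n)) sums Re (Ln (1 - u))"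
    by (simp add: Re_divide_of_nat)
  moreover have "1 - u \<noteq> 0"
    using assms by auto
  ultimately show ?thesis
    using sums_minus by fastforce
qed

lemma ln_norm_quadratic_cos_sums:
  fixes q :: complex
  assumes "norm q < 1"
  shows "(\<lambda>n. 2 * cos (real n * \<theta>) * Re (q ^ n) / real n)
           sums - ln (norm (1 - 2 * q * of_real (cos \<theta>) + q\<^sup>2))"
proof -
  define u v where "u = q * cis \<theta>" and "v = q * cis (- \<theta>)"
  have uv: "norm u < 1" "norm v < 1"
    using assms by (simp_all add: u_def v_def norm_mult)
  have factor: "(1 - u) * (1 - v) = 1 - 2 * q * of_real (cos \<theta>) + q\<^sup>2"
    by (simp add: u_def v_def complex_eq_iff power2_eq_square algebra_simps)
  have terms: "Re (u ^ n) / real n + Re (v ^ n) / real n = 2 * cos (real n * \<theta>) * Re (q ^ n) / real n"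
    for n
  proof -
    have "u ^ n + v ^ n = q ^ n * (cis (real n * \<theta>) + cis (- (real n * \<theta>)))"
      by (simp add: u_def v_def power_mult_distrib Complex.DeMoivre algebra_simps)
    also have "cis (real n * \<theta>) + cis (- (real n * \<theta>)) = of_real (2 * cos (real n * \<theta>))"
      by (simp add: complex_eq_iff)
    finally have "u ^ n + v ^ n = q ^ n * of_real (2 * cos (real n * \<theta>))" .
    from arg_cong[OF this, of Re] have "Re (u ^ n) + Re (v ^ n) = 2 * cos (real n * \<theta>) * Re (q ^ n)"
      by simp
    then show ?thesis
      by (simp add: add_divide_distrib[symmetric])
  qed
  have "1 - u \<noteq> 0" "1 - v \<noteq> 0"
    using uv by auto
  then have "- ln (norm (1 - u)) + - ln (norm (1 - v)) = - ln (norm (1 - 2 * q * of_real (cos \<theta>) + q\<^sup>2))"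
    by (simp flip: factor add: norm_mult ln_mult)
  with sums_add[OF ln_norm_one_minus_sums[OF uv(1)] ln_norm_one_minus_sums[OF uv(2)]]
  show ?thesis
    by (simp only: terms)
qed

lemma abs_divide_of_nat_le: "\<bar>c / real n\<bar> \<le> \<bar>c\<bar>"
  by (cases n) (auto simp: abs_divide divide_le_eq algebra_simps)

lemma abs_cos_mult_Re_power_divide_le: "\<bar>2 * cos y * Re (q ^ n) / real n\<bar> \<le> 2 * norm q ^ n"
proof -
  have "\<bar>2 * cos y * Re (q ^ n) / real n\<bar> \<le> \<bar>2 * cos y * Re (q ^ n)\<bar>"
    by (rule abs_divide_of_nat_le)
  also have "\<dots> = 2 * (\<bar>cos y\<bar> * \<bar>Re (q ^ n)\<bar>)"
    by (simp add: abs_mult)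
  also have "\<dots> \<le> 2 * (1 * norm q ^ n)"
    using abs_Re_le_cmod[of "q ^ n"] by (intro mult_left_mono mult_mono) (auto simp: norm_power)
  finally show ?thesis
    by simp
qed

lemma sums_integral_geometric_bound:
  fixes f :: "nat \<Rightarrow> 'a \<Rightarrow> real"
  assumes "finite_measure M"
    and f_measurable: "\<And>n. f n \<in> borel_measurable M" and g_measurable: "g \<in> borel_measurable M"
    and sums: "AE x in M. (\<lambda>n. f n x) sums g x"
    and bound: "\<And>n x. x \<in> space M \<Longrightarrow> \<bar>f n x\<bar> \<le> C * \<rho> ^ n"
    and "0 \<le> \<rho>" "\<rho> < 1"
  shows "integrable M g" and "(\<lambda>n. integral\<^sup>L M (f n)) sums integral\<^sup>L M g"
proof -
  interpret finite_measure M
    by fact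
  have f_integrable: "integrable M (f n)" for n
    using bound f_measurable by (intro integrable_const_bound[where B="C * \<rho> ^ n"]) auto
  have geometric: "summable (\<lambda>n. C * \<rho> ^ n)"
    using assms by (intro summable_mult summable_geometric) auto
  have "AE x in M. summable (\<lambda>n. norm (f n x))"
    using bound by (intro AE_I2 summable_comparison_test'[OF geometric]) auto
  moreover have "summable (\<lambda>n. \<integral>x. norm (f n x) \<partial>M)"
  proof (rule summable_comparison_test'[OF summable_mult2[OF geometric]])
    fix n
    have "(\<integral>x. norm (f n x) \<partial>M) \<le> (\<integral>x. C * \<rho> ^ n \<partial>M)"
      using f_integrable bound by (intro integral_mono) auto
    then show "norm (\<integral>x. norm (f n x) \<partial>M) \<le> C * \<rho> ^ n * measure M (space M)"
      by (simp add: mult_ac)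
  qed
  ultimately have "integrable M (\<lambda>x. \<Sum>n. f n x)"
      and "(\<lambda>n. integral\<^sup>L M (f n)) sums (\<integral>x. (\<Sum>n. f n x) \<partial>M)"
    using integrable_suminf sums_integral f_integrable by blast+
  moreover have suminf_eq: "AE x in M. (\<Sum>n. f n x) = g x"
    using sums by eventually_elim (rule sums_unique[symmetric])
  then have "(\<integral>x. (\<Sum>n. f n x) \<partial>M) = integral\<^sup>L M g"
    using g_measurable f_measurable by (intro integral_cong_AE) auto
  ultimately show "integrable M g" and "(\<lambda>n. integral\<^sup>L M (f n)) sums integral\<^sup>L M g"
    using suminf_eq g_measurable by (auto intro: integrable_cong_AE_imp)
qed

section \<open>The conformal map phi\<close>

lemma phi_eq_square: "phi z = (csqrt (z - 1) + csqrt (z + 1))\<^sup>2 / 2"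
proof -
  have "(csqrt (z - 1) + csqrt (z + 1))\<^sup>2 = 2 * z + 2 * (csqrt (z - 1) * csqrt (z + 1))"
    unfolding power2_sum by simp
  then show ?thesis
    unfolding phi_def by simp
qed

lemma phi_mult_square_diff: "phi z * ((csqrt (z - 1) - csqrt (z + 1))\<^sup>2 / 2) = 1"
proof -
  define a b where "a = csqrt (z - 1)" and "b = csqrt (z + 1)"
  have "(a + b)\<^sup>2 / 2 * ((a - b)\<^sup>2 / 2) = (a\<^sup>2 - b\<^sup>2)\<^sup>2 / 4"
    by (simp add: power2_eq_square algebra_simps)
  also have "\<dots> = 1"
    by (simp add: a_def b_def)
  finally show ?thesis
    by (simp add: phi_eq_square a_def b_def)
qed

lemma phi_nonzero: "phi z \<noteq> 0"
  using phi_mult_square_diff[of z] by auto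

lemma inverse_phi_eq_square: "1 / phi z = (csqrt (z - 1) - csqrt (z + 1))\<^sup>2 / 2"
  using phi_mult_square_diff[of z] phi_nonzero[of z] by (simp add: divide_eq_eq mult.commute)

lemma phi_add_inverse: "phi z + 1 / phi z = 2 * z"
proof -
  have "(csqrt (z - 1) + csqrt (z + 1))\<^sup>2 + (csqrt (z - 1) - csqrt (z + 1))\<^sup>2 = 4 * z"
    unfolding power2_sum power2_diff by simp
  then show ?thesis
    by (subst inverse_phi_eq_square) (simp add: phi_eq_square add_divide_distrib[symmetric])
qed

lemma norm_diff_le_norm_add:
  fixes a b :: complex
  assumes "0 \<le> Re a * Re b + Im a * Im b"
  shows "norm (a - b) \<le> norm (a + b)"
proof (rule power2_le_imp_le)
  have "(norm (a + b))\<^sup>2 - (norm (a - b))\<^sup>2 = 4 * (Re a * Re b + Im a * Im b)"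
    unfolding cmod_power2 by (simp add: power2_eq_square algebra_simps)
  with assms have "0 \<le> (norm (a + b))\<^sup>2 - (norm (a - b))\<^sup>2"
    by simp
  then show "(norm (a - b))\<^sup>2 \<le> (norm (a + b))\<^sup>2"
    by simp
qed simp

text \<open>z - 1 and z + 1 have the same imaginary part, so their principal square roots lie in
  the same closed quadrant.\<close>
lemma Im_csqrt_mult_nonneg: "0 \<le> Im (csqrt (z - 1)) * Im (csqrt (z + 1))"
proof -
  have sqrt_nonneg: "0 \<le> sqrt ((cmod w - Re w) / 2)" for w
    using complex_Re_le_cmod[of w] by simp
  show ?thesis
  proof (cases "Im z = 0")
    case True
    then show ?thesis
      using sqrt_nonneg[of "z - 1"] sqrt_nonneg[of "z + 1"] by simp
  next
    case False
    then have eq: "Im (csqrt (z - 1)) * Im (csqrt (z + 1)) =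
        (sgn (Im z) * sgn (Im z)) * (sqrt ((cmod (z - 1) - Re (z - 1)) / 2) * sqrt ((cmod (z + 1) - Re (z + 1)) / 2))"
      by (simp add: mult_ac)
    have "sgn (Im z) * sgn (Im z) = 1"
      using False by (simp add: sgn_real_def)
    then show ?thesis
      unfolding eq using sqrt_nonneg[of "z - 1"] sqrt_nonneg[of "z + 1"] by simp
  qed
qed

lemma norm_phi_ge_1: "1 \<le> norm (phi z)"
proof -
  define a b where "a = csqrt (z - 1)" and "b = csqrt (z + 1)"
  have "0 \<le> Re a * Re b + Im a * Im b"
    unfolding a_def b_def by (intro add_nonneg_nonneg mult_nonneg_nonneg Re_csqrt Im_csqrt_mult_nonneg)
  then have "(norm (a - b))\<^sup>2 / 2 \<le> (norm (a + b))\<^sup>2 / 2"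
    by (intro divide_right_mono power_mono norm_diff_le_norm_add) auto
  moreover have "norm (1 / phi z) = (norm (a - b))\<^sup>2 / 2"
    unfolding inverse_phi_eq_square a_def b_def by (simp add: norm_divide norm_power)
  moreover have "norm (phi z) = (norm (a + b))\<^sup>2 / 2"
    unfolding phi_eq_square a_def b_def by (simp add: norm_divide norm_power)
  ultimately have "norm (1 / phi z) \<le> norm (phi z)"
    by linarith
  then have "1 / norm (phi z) \<le> norm (phi z)"
    by (simp add: norm_divide)
  then have "1\<^sup>2 \<le> (norm (phi z))\<^sup>2"
    using phi_nonzero[of z] by (simp add: divide_le_eq power2_eq_square)
  then show ?thesis
    by (rule power2_le_imp_le) simp
qed

lemma norm_inverse_phi_le_1: "norm (1 / phi z) \<le> 1"
  using norm_phi_ge_1[of z] by (simp add: norm_divide divide_le_eq)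

lemma norm_phi_gt_1:
  assumes "z \<notin> E_int"
  shows "1 < norm (phi z)"
proof (rule ccontr)
  define A where "A = Arg (phi z)"
  assume "\<not> 1 < norm (phi z)"
  then have "norm (phi z) = 1"
    using norm_phi_ge_1[of z] by simp
  then have "phi z = cis A"
    using rcis_cmod_Arg[of "phi z"] by (simp add: rcis_def A_def)
  moreover have "1 / cis A = cis (- A)"
    by (simp add: divide_inverse cis_inverse)
  ultimately have "2 * z = cis A + cis (- A)"
    using phi_add_inverse[of z] by simp
  then have "z = of_real (cos A)"
    by (simp add: complex_eq_iff)
  then have "z \<in> E_int"
    unfolding E_int_def by simp
  with assms show False
    by simp
qed

lemma norm_inverse_phi_lt_1: "z \<notin> E_int \<Longrightarrow> norm (1 / phi z) < 1"
  using norm_phi_gt_1[of z] by (simp add: norm_divide divide_less_eq)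

lemma norm_inverse_phi_mult_lt_1:
  assumes "z \<notin> E_int"
  shows "norm (1 / (phi z * phi t)) < 1"
proof -
  have "norm (1 / (phi z * phi t)) = norm (1 / phi z) * norm (1 / phi t)"
    by (simp add: norm_divide norm_mult)
  also have "\<dots> \<le> norm (1 / phi z)"
    using norm_inverse_phi_le_1[of t] by (simp add: mult_left_le)
  also have "\<dots> < 1"
    using assms by (rule norm_inverse_phi_lt_1)
  finally show ?thesis .
qed

lemma phi_of_real:
  fixes t :: real
  assumes "1 < \<bar>t\<bar>"
  shows "phi (of_real t) = of_real (t + sgn t * sqrt (t\<^sup>2 - 1))"
proof (cases "t > 1")
  case True
  then have "csqrt (of_real t - 1) * csqrt (of_real t + 1) = of_real (sqrt (t - 1) * sqrt (t + 1))"
    by simp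
  moreover have "sqrt (t - 1) * sqrt (t + 1) = sqrt (t\<^sup>2 - 1)"
    by (simp add: real_sqrt_mult[symmetric] power2_eq_square algebra_simps)
  ultimately show ?thesis
    using True unfolding phi_def by simp
next
  case False
  then have t: "t < -1"
    using assms by auto
  then have "csqrt (of_real t - 1) * csqrt (of_real t + 1) = - of_real (sqrt (1 - t) * sqrt (- t - 1))"
    by (simp add: algebra_simps)
  moreover have "sqrt (1 - t) * sqrt (- t - 1) = sqrt (t\<^sup>2 - 1)"
    by (simp add: real_sqrt_mult[symmetric] power2_eq_square algebra_simps)
  ultimately show ?thesis
    using t unfolding phi_def by simp
qed

lemma borel_measurable_csqrt [measurable]: "csqrt \<in> borel_measurable borel"
proof -
  have "csqrt = (\<lambda>z. Complex (sqrt ((cmod z + Re z) / 2))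
      ((if Im z = 0 then 1 else sgn (Im z)) * sqrt ((cmod z - Re z) / 2)))"
    by (simp add: fun_eq_iff complex_eq_iff)
  then show ?thesis
    by (simp add: borel_measurable_complex_iff)
qed

lemma borel_measurable_phi [measurable]: "phi \<in> borel_measurable borel"
  unfolding phi_def[abs_def] by measurable

lemma closed_E_int: "closed E_int"
  unfolding E_int_def
  by (intro compact_imp_closed compact_continuous_image continuous_intros) auto

lemma E_int_borel [measurable]: "E_int \<in> sets borel"
  using closed_E_int by (rule borel_closed)

section \<open>The arcsine measure as an image of the uniform measure on an arc\<close>

text \<open>The arc [-pi, 0] is used because cos increases on it, as the change of variables
  t = cos x in \<open>distr_uniform_arc_cos\<close> requires.\<close>

definition uniform_arc :: "real measure" where
  "uniform_arc = density lborel (\<lambda>x. ennreal (indicator {-pi..0} x / pi))"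

lemma sets_uniform_arc [simp, measurable_cong]: "sets uniform_arc = sets borel"
  by (simp add: uniform_arc_def)

lemma space_uniform_arc [simp]: "space uniform_arc = UNIV"
  by (simp add: uniform_arc_def)

lemma prob_space_uniform_arc: "prob_space uniform_arc"
proof (rule prob_spaceI)
  have "emeasure uniform_arc UNIV = (\<integral>\<^sup>+x. ennreal (1 / pi) * indicator {-pi..0} x \<partial>lborel)"
    unfolding uniform_arc_def by (auto simp: emeasure_density indicator_def intro!: nn_integral_cong)
  also have "\<dots> = 1"
    by (simp add: nn_integral_cmult_indicator flip: ennreal_mult)
  finally show "emeasure uniform_arc (space uniform_arc) = 1"
    by simp
qed

interpretation uniform_arc: prob_space uniform_arc
  by (rule prob_space_uniform_arc)

lemma integrable_uniform_arc_continuous: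
  fixes g :: "real \<Rightarrow> real"
  assumes "continuous_on UNIV g"
  shows "integrable uniform_arc g"
proof -
  have "set_integrable lborel {-pi..0} g"
    using assms by (intro borel_integrable_atLeastAtMost') (auto intro: continuous_on_subset)
  then have "integrable lborel (\<lambda>x. (indicator {-pi..0} x / pi) *\<^sub>R g x)"
    unfolding set_integrable_def using integrable_scaleR_right[where c="1 / pi"]
    by (simp add: mult.commute)
  then show ?thesis
    using assms unfolding uniform_arc_def
    by (subst integrable_density) (auto intro: borel_measurable_continuous_onI)
qed

lemma integral_uniform_arc_cos:
  "(\<integral>x. cos (of_int k * x) \<partial>uniform_arc) = (if k = 0 then 1 else 0)"
proof (cases "k = 0")
  case True
  then show ?thesis
    using uniform_arc.prob_space by simp
next
  case False
  have "(\<integral>x. cos (of_int k * x) \<partial>uniform_arc) = (LBINT x. cos (of_int k * x) * indicator {-pi..0} x) / pi"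
    unfolding uniform_arc_def by (subst integral_density) (auto simp: mult.commute)
  also have "(LBINT x. cos (of_int k * x) * indicator {-pi..0} x) =
      sin (of_int k * 0) / of_int k - sin (of_int k * - pi) / of_int k"
    using False by (intro integral_FTC_Icc_real) (auto intro!: derivative_eq_intros continuous_intros)
  also have "\<dots> = 0"
    by (simp add: mult.commute)
  finally show ?thesis
    using False by simp
qed

lemma integral_uniform_arc_cos_nat:
  "(\<integral>x. cos (real m * x) \<partial>uniform_arc) = (if m = 0 then 1 else 0)"
  using integral_uniform_arc_cos[of "int m"] by simp

lemma integral_uniform_arc_cos_mult_cos:
  "(\<integral>x. cos (real n * x) * cos (real m * x) \<partial>uniform_arc) = (if n = m then (if n = 0 then 1 else 1 / 2) else 0)"
proof -
  define c :: "int \<Rightarrow> real \<Rightarrow> real" where "c k x = cos (of_int k * x)" for k x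
  have c_integrable: "integrable uniform_arc (c k)" for k
    unfolding c_def by (intro integrable_uniform_arc_continuous continuous_intros)
  have "(\<integral>x. cos (real n * x) * cos (real m * x) \<partial>uniform_arc) =
      (\<integral>x. (c (int n + int m) x + c (int n - int m) x) / 2 \<partial>uniform_arc)"
    by (intro Bochner_Integration.integral_cong) (simp_all add: c_def cos_add cos_diff algebra_simps)
  also have "\<dots> = (integral\<^sup>L uniform_arc (c (int n + int m)) + integral\<^sup>L uniform_arc (c (int n - int m))) / 2"
    using c_integrable by simp
  also have "\<dots> = (if n = m then (if n = 0 then 1 else 1 / 2) else 0)"
    unfolding c_def integral_uniform_arc_cos by auto
  finally show ?thesis .
qed

lemma
  fixes a :: "nat \<Rightarrow> real"
  assumes sums: "\<And>x. (\<lambda>n. a n * cos (real n * x)) sums g x"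
    and bound: "\<And>n. \<bar>a n\<bar> \<le> C * \<rho> ^ n" and "0 \<le> \<rho>" "\<rho> < 1"
  shows integrable_uniform_arc_cosine_series: "integrable uniform_arc (\<lambda>x. g x * cos (real m * x))"
    and integral_uniform_arc_cosine_series:
      "(\<integral>x. g x * cos (real m * x) \<partial>uniform_arc) = (if m = 0 then a 0 else a m / 2)"
proof -
  define f where "f n x = a n * (cos (real n * x) * cos (real m * x))" for n x
  have f_measurable: "f n \<in> borel_measurable uniform_arc" for n
    unfolding f_def by measurable
  have "g = (\<lambda>x. \<Sum>n. a n * cos (real n * x))"
    using sums by (simp add: fun_eq_iff sums_iff)
  then have g_measurable: "(\<lambda>x. g x * cos (real m * x)) \<in> borel_measurable uniform_arc"
    by simp
  have f_sums: "AE x in uniform_arc. (\<lambda>n. f n x) sums (g x * cos (real m * x))"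
    using sums_mult2[OF sums] by (simp add: f_def mult.assoc)
  have f_bound: "\<bar>f n x\<bar> \<le> C * \<rho> ^ n" for n x
  proof -
    have "\<bar>f n x\<bar> \<le> \<bar>a n\<bar>"
      by (simp add: f_def abs_mult mult_le_one mult_left_le)
    then show ?thesis
      using bound[of n] by (rule order_trans)
  qed
  note geometric = sums_integral_geometric_bound[OF uniform_arc.finite_measure_axioms
      f_measurable g_measurable f_sums f_bound assms(3,4)]
  show "integrable uniform_arc (\<lambda>x. g x * cos (real m * x))"
    by (rule geometric(1))
  have "integral\<^sup>L uniform_arc (f n) = (if n = m then (if m = 0 then a 0 else a m / 2) else 0)" for n
    unfolding f_def[abs_def] by (simp add: integral_uniform_arc_cos_mult_cos)
  with geometric(2) show "(\<integral>x. g x * cos (real m * x) \<partial>uniform_arc) = (if m = 0 then a 0 else a m / 2)"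
    using sums_single[of m "\<lambda>_. if m = 0 then a 0 else a m / 2"] sums_unique2 by fastforce
qed

lemma arcsine_density_cos_mult_sin:
  assumes "x \<in> {-pi<..<0}"
  shows "indicator {-1<..<1} (cos x) / (pi * sqrt (1 - (cos x)\<^sup>2)) * (- sin x) = 1 / pi"
proof -
  have "sin x < 0"
    using sin_gt_zero[of "- x"] assms by auto
  moreover have "1 - (cos x)\<^sup>2 = (sin x)\<^sup>2"
    by (simp add: sin_squared_eq)
  moreover from \<open>sin x < 0\<close> have "\<bar>cos x\<bar> < 1"
    using sin_cos_squared_add[of x] abs_square_less_1[of "cos x"] by (smt (verit) zero_less_power2)
  ultimately show ?thesis
    by (auto simp: indicator_def abs_less_iff)
qed

lemma distr_uniform_arc_cos:
  "distr uniform_arc borel cos = density lborel (\<lambda>t. ennreal (indicator {-1<..<1} t / (pi * sqrt (1 - t\<^sup>2))))"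
proof (rule measure_eqI)
  fix A :: "real set"
  assume "A \<in> sets (distr uniform_arc borel cos)"
  then have A[measurable]: "A \<in> sets borel"
    by simp
  define f where "f t = indicator {-1<..<1} t / (pi * sqrt (1 - t\<^sup>2)) * indicator A t" for t :: real
  have "cos -` A \<in> sets borel"
    using measurable_sets_borel[OF _ A, of cos] by (simp add: vimage_def)
  then have "emeasure (distr uniform_arc borel cos) A =
      (\<integral>\<^sup>+x. ennreal (indicator {-pi..0} x / pi) * indicator (cos -` A) x \<partial>lborel)"
    unfolding uniform_arc_def by (subst emeasure_distr) (auto simp: emeasure_density)
  also have "\<dots> = (\<integral>\<^sup>+x. ennreal (f (cos x) * (- sin x) * indicator {-pi..0} x) \<partial>lborel)"
  proof (rule nn_integral_cong_AE)
    have "AE x in lborel. x \<noteq> -pi \<and> x \<noteq> 0"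
      using AE_lborel_singleton[of "-pi"] AE_lborel_singleton[of 0] by eventually_elim auto
    then show "AE x in lborel. ennreal (indicator {-pi..0} x / pi) * indicator (cos -` A) x =
        ennreal (f (cos x) * (- sin x) * indicator {-pi..0} x)"
    proof eventually_elim
      case (elim x)
      show ?case
      proof (cases "x \<in> {-pi..0}")
        case True
        with elim have "x \<in> {-pi<..<0}"
          by auto
        from arcsine_density_cos_mult_sin[OF this] show ?thesis
          using True by (simp add: f_def indicator_def mult_ac)
      qed simp
    qed
  qed
  also have "\<dots> = (\<integral>\<^sup>+t. ennreal (f t * indicator {cos (-pi)..cos 0} t) \<partial>lborel)"
  proof -
    have "sin x \<le> 0" if "x \<in> {-pi..0}" for x
      using sin_ge_zero[of "- x"] that by auto
    then show ?thesis
      unfolding f_def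
      by (intro nn_integral_substitution[symmetric])
        (auto intro!: derivative_eq_intros continuous_intros simp: set_borel_measurable_def)
  qed
  also have "\<dots> = emeasure (density lborel (\<lambda>t. ennreal (indicator {-1<..<1} t / (pi * sqrt (1 - t\<^sup>2))))) A"
    by (subst emeasure_density) (auto intro!: nn_integral_cong simp: f_def indicator_def)
  finally show "emeasure (distr uniform_arc borel cos) A =
      emeasure (density lborel (\<lambda>t. ennreal (indicator {-1<..<1} t / (pi * sqrt (1 - t\<^sup>2))))) A" .
qed simp

lemma tau_E_eq_distr: "tau_E = distr uniform_arc borel (\<lambda>x. of_real (cos x))"
proof -
  have "tau_E = distr (distr uniform_arc borel cos) borel complex_of_real"
    unfolding tau_E_def distr_uniform_arc_cos ..
  also have "\<dots> = distr uniform_arc borel (complex_of_real \<circ> cos)"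
    by (subst distr_distr) auto
  finally show ?thesis
    by (simp add: comp_def)
qed

section \<open>Fourier coefficients of ln |cos x - cos theta|\<close>

text \<open>For s = r + 1 / r, gap_sq a s x is |1 - 2 r e^(ix) a + r^2 e^(2ix)|^2 / r^2
  (\<open>norm_quadratic_cis_sq\<close>).\<close>

definition gap_sq :: "real \<Rightarrow> real \<Rightarrow> real \<Rightarrow> real" where
  "gap_sq a s x = s\<^sup>2 - 4 * a * s * cos x + 4 * a\<^sup>2 - 4 * (sin x)\<^sup>2"

lemma gap_sq_two: "gap_sq a 2 x = (2 * (cos x - a))\<^sup>2"
  unfolding gap_sq_def sin_squared_eq by (simp add: power2_eq_square algebra_simps)

lemma gap_sq_diff: "gap_sq a s' x - gap_sq a s x = (s' - s) * (s' + s - 4 * a * cos x)"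
  unfolding gap_sq_def by (simp add: power2_eq_square algebra_simps)

lemma mult_cos_le_1:
  fixes a x :: real
  assumes "\<bar>a\<bar> \<le> 1"
  shows "a * cos x \<le> 1"
proof -
  have "\<bar>a\<bar> * \<bar>cos x\<bar> \<le> 1"
    using assms by (intro mult_le_one) auto
  then have "\<bar>a * cos x\<bar> \<le> 1"
    by (simp add: abs_mult)
  then show ?thesis
    by (simp add: abs_le_iff)
qed

lemma gap_sq_mono:
  assumes "\<bar>a\<bar> \<le> 1" "2 \<le> s" "s \<le> s'"
  shows "gap_sq a s x \<le> gap_sq a s' x"
proof -
  have "0 \<le> (s' - s) * (s' + s - 4 * a * cos x)"
    using mult_cos_le_1[OF assms(1), of x] assms by (intro mult_nonneg_nonneg) auto
  then show ?thesis
    using gap_sq_diff[of a s' x s] by linarith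
qed

lemma gap_sq_pos:
  assumes "\<bar>a\<bar> \<le> 1" "2 < s"
  shows "0 < gap_sq a s x"
proof -
  have "0 < (s - 2) * (s + 2 - 4 * a * cos x)"
    using mult_cos_le_1[OF assms(1), of x] assms by (intro mult_pos_pos) auto
  then show ?thesis
    using gap_sq_diff[of a s x 2] gap_sq_two[of a x] by (smt (verit) zero_le_power2)
qed

lemma norm_quadratic_cis_sq:
  fixes a r x :: real
  assumes "0 < r"
  shows "(norm (1 - 2 * (r * cis x) * of_real a + (r * cis x)\<^sup>2))\<^sup>2 = r\<^sup>2 * gap_sq a (r + 1 / r) x"
proof -
  define w where "w = Complex ((r + 1 / r) * cos x - 2 * a) ((r - 1 / r) * sin x)"
  have sin_sq: "sin x * sin x = 1 - cos x * cos x"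
    using sin_squared_eq[of x] by (simp add: power2_eq_square)
  have "1 - 2 * (r * cis x) * of_real a + (r * cis x)\<^sup>2 = (r * cis x) * w"
    using assms by (simp add: w_def complex_eq_iff power2_eq_square field_simps sin_sq)
  moreover have "(norm w)\<^sup>2 = ((r + 1 / r) * cos x - 2 * a)\<^sup>2 + ((r - 1 / r) * sin x)\<^sup>2"
    by (simp add: w_def cmod_power2)
  moreover have "\<dots> = gap_sq a (r + 1 / r) x"
    using assms unfolding gap_sq_def by (simp add: power2_eq_square field_simps sin_sq)
  ultimately show ?thesis
    using assms by (simp add: norm_mult power_mult_distrib)
qed

lemma add_inverse_gt_2:
  fixes r :: real
  assumes "0 < r" "r < 1"
  shows "2 < r + 1 / r"
proof -
  have "0 < (1 - r)\<^sup>2"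
    using assms by simp
  then have "2 * r < r\<^sup>2 + 1"
    by (simp add: power2_eq_square algebra_simps)
  then show ?thesis
    using assms by (simp add: field_simps power2_eq_square)
qed

lemma add_inverse_antimono:
  fixes r r' :: real
  assumes "0 < r" "r \<le> r'" "r' \<le> 1"
  shows "r' + 1 / r' \<le> r + 1 / r"
proof -
  have "r * r' \<le> 1 * 1"
    using assms by (intro mult_mono) auto
  then have "0 \<le> (r' - r) * (1 / (r * r') - 1)"
    using assms by (intro mult_nonneg_nonneg) (auto simp: field_simps)
  also have "\<dots> = (r + 1 / r) - (r' + 1 / r')"
    using assms by (simp add: field_simps)
  finally show ?thesis
    by simp
qed

definition abel_radius :: "nat \<Rightarrow> real" where
  "abel_radius k = 1 - 1 / (real k + 2)"

lemma abel_radius_pos: "0 < abel_radius k"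
  and abel_radius_less_1: "abel_radius k < 1"
  unfolding abel_radius_def by (auto simp: field_simps)

lemma abel_radius_mono: "k \<le> l \<Longrightarrow> abel_radius k \<le> abel_radius l"
  unfolding abel_radius_def by (auto simp: field_simps)

lemma abel_radius_tendsto: "abel_radius \<longlonglongrightarrow> 1"
  unfolding abel_radius_def[abs_def] by real_asymp

definition log_gap :: "real \<Rightarrow> real \<Rightarrow> real" where
  "log_gap \<theta> x = ln (2 * \<bar>cos x - cos \<theta>\<bar>)"

text \<open>With r = abel_radius k, log_gap_approx \<theta> k x equals
  ln |1 - 2 r e^(ix) cos \<theta> + r^2 e^(2ix)| - ln r, and it decreases to log_gap \<theta> x as k grows.\<close>

definition log_gap_approx :: "real \<Rightarrow> nat \<Rightarrow> real \<Rightarrow> real" where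
  "log_gap_approx \<theta> k x = ln (gap_sq (cos \<theta>) (abel_radius k + 1 / abel_radius k) x) / 2"

lemma gap_sq_abel_pos: "0 < gap_sq (cos \<theta>) (abel_radius k + 1 / abel_radius k) x"
  by (intro gap_sq_pos add_inverse_gt_2 abel_radius_pos abel_radius_less_1) simp

lemma log_gap_approx_sums:
  "(\<lambda>n. 2 * cos (real n * \<theta>) * (abel_radius k ^ n * cos (real n * x)) / real n)
     sums - (ln (abel_radius k) + log_gap_approx \<theta> k x)"
proof -
  define r where "r = abel_radius k"
  have r: "0 < r" "r < 1"
    unfolding r_def by (rule abel_radius_pos abel_radius_less_1)+
  define y where "y = norm (1 - 2 * (r * cis x) * of_real (cos \<theta>) + (r * cis x)\<^sup>2)"
  have "y\<^sup>2 = r\<^sup>2 * gap_sq (cos \<theta>) (r + 1 / r) x"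
    unfolding y_def using r(1) by (rule norm_quadratic_cis_sq)
  then have "ln (y\<^sup>2) = 2 * ln r + ln (gap_sq (cos \<theta>) (r + 1 / r) x)"
    using r gap_sq_abel_pos[of \<theta> k x] by (simp add: r_def ln_mult ln_realpow)
  moreover have "y \<noteq> 0"
    using \<open>y\<^sup>2 = _\<close> r gap_sq_abel_pos[of \<theta> k x] by (auto simp: r_def)
  ultimately have "ln y = ln r + log_gap_approx \<theta> k x"
    by (simp add: log_gap_approx_def r_def ln_realpow y_def)
  moreover have "Re ((r * cis x) ^ n) = r ^ n * cos (real n * x)" for n
    by (simp add: power_mult_distrib Complex.DeMoivre)
  moreover have "norm (r * cis x) < 1"
    using r by (simp add: norm_mult)
  ultimately show ?thesis
    using ln_norm_quadratic_cos_sums[of "r * cis x" \<theta>] by (simp add: y_def r_def)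
qed

lemma continuous_log_gap_approx: "continuous_on UNIV (log_gap_approx \<theta> k)"
proof -
  have "gap_sq (cos \<theta>) (abel_radius k + 1 / abel_radius k) x \<noteq> 0" for x
    using gap_sq_abel_pos[of \<theta> k x] by simp
  then show ?thesis
    unfolding log_gap_approx_def[abs_def] gap_sq_def by (intro continuous_intros) (auto simp: gap_sq_def)
qed

lemma borel_measurable_log_gap_approx [measurable]: "log_gap_approx \<theta> k \<in> borel_measurable borel"
  using continuous_log_gap_approx by (rule borel_measurable_continuous_onI)

lemma integral_log_gap_approx_mult_cos:
  "(\<integral>x. log_gap_approx \<theta> k x * cos (real m * x) \<partial>uniform_arc) =
     - cos (real m * \<theta>) * abel_radius k ^ m / real m - (if m = 0 then ln (abel_radius k) else 0)"
proof -
  define r where "r = abel_radius k"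
  have r: "0 < r" "r < 1"
    unfolding r_def by (rule abel_radius_pos abel_radius_less_1)+
  define a where "a n = 2 * r ^ n * (cos (real n * \<theta>) / real n)" for n
  have a_sums: "(\<lambda>n. a n * cos (real n * x)) sums (- (ln r + log_gap_approx \<theta> k x))" for x
    using log_gap_approx_sums[of \<theta> k x] by (simp add: a_def r_def mult_ac)
  have a_bound: "\<bar>a n\<bar> \<le> 2 * r ^ n" for n
  proof -
    have "\<bar>a n\<bar> = 2 * r ^ n * \<bar>cos (real n * \<theta>) / real n\<bar>"
      using r by (simp add: a_def abs_mult)
    also have "\<dots> \<le> 2 * r ^ n * 1"
      using r by (intro mult_left_mono order_trans[OF abs_divide_of_nat_le abs_cos_le_one]) auto
    finally show ?thesis
      by simp
  qed
  have "(\<integral>x. - (ln r + log_gap_approx \<theta> k x) * cos (real m * x) \<partial>uniform_arc) =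
      cos (real m * \<theta>) * r ^ m / real m"
    using r integral_uniform_arc_cosine_series[OF a_sums a_bound, of m] by (auto simp: a_def)
  moreover have "integrable uniform_arc (\<lambda>x. log_gap_approx \<theta> k x * cos (real m * x))"
    by (intro integrable_uniform_arc_continuous continuous_intros
        continuous_log_gap_approx[THEN continuous_on_subset]) auto
  moreover have "integrable uniform_arc (\<lambda>x. cos (real m * x))"
    by (intro integrable_uniform_arc_continuous continuous_intros)
  ultimately show ?thesis
    by (simp add: ring_distribs integral_uniform_arc_cos_nat r_def) (auto simp: algebra_simps)
qed

lemma abel_sum_ge_2: "2 \<le> abel_radius k + 1 / abel_radius k"
  using add_inverse_gt_2[OF abel_radius_pos abel_radius_less_1, of k] by simp

lemma borel_measurable_log_gap [measurable]: "log_gap \<theta> \<in> borel_measurable borel"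
  unfolding log_gap_def[abs_def] by measurable

lemma log_gap_approx_antimono:
  assumes "k \<le> l"
  shows "log_gap_approx \<theta> l x \<le> log_gap_approx \<theta> k x"
proof -
  have "abel_radius l + 1 / abel_radius l \<le> abel_radius k + 1 / abel_radius k"
    using assms abel_radius_less_1[of l]
    by (intro add_inverse_antimono abel_radius_pos abel_radius_mono) auto
  then have "gap_sq (cos \<theta>) (abel_radius l + 1 / abel_radius l) x \<le>
      gap_sq (cos \<theta>) (abel_radius k + 1 / abel_radius k) x"
    by (intro gap_sq_mono abel_sum_ge_2) simp_all
  then show ?thesis
    unfolding log_gap_approx_def using gap_sq_abel_pos[of \<theta> l x] by simp
qed

lemma log_gap_eq_ln_gap_sq_two:
  assumes "cos x \<noteq> cos \<theta>"
  shows "log_gap \<theta> x = ln (gap_sq (cos \<theta>) 2 x) / 2"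
proof -
  have "gap_sq (cos \<theta>) 2 x = (2 * \<bar>cos x - cos \<theta>\<bar>) ^ 2"
    unfolding gap_sq_two power_mult_distrib power2_abs ..
  moreover have "0 < 2 * \<bar>cos x - cos \<theta>\<bar>"
    using assms by simp
  ultimately have "ln (gap_sq (cos \<theta>) 2 x) = real 2 * log_gap \<theta> x"
    unfolding log_gap_def by (simp only: ln_realpow)
  then show ?thesis
    by simp
qed

lemma log_gap_le_approx:
  assumes "cos x \<noteq> cos \<theta>"
  shows "log_gap \<theta> x \<le> log_gap_approx \<theta> k x"
proof -
  have "gap_sq (cos \<theta>) 2 x \<le> gap_sq (cos \<theta>) (abel_radius k + 1 / abel_radius k) x"
    by (intro gap_sq_mono abel_sum_ge_2) simp_all
  moreover have "0 < gap_sq (cos \<theta>) 2 x"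
    using assms by (simp add: gap_sq_two)
  ultimately show ?thesis
    unfolding log_gap_eq_ln_gap_sq_two[OF assms] log_gap_approx_def by simp
qed

lemma log_gap_approx_tendsto:
  assumes "cos x \<noteq> cos \<theta>"
  shows "(\<lambda>k. log_gap_approx \<theta> k x) \<longlonglongrightarrow> log_gap \<theta> x"
proof -
  have "(\<lambda>k. abel_radius k + 1 / abel_radius k) \<longlonglongrightarrow> 2"
    unfolding abel_radius_def by real_asymp
  then have "(\<lambda>k. gap_sq (cos \<theta>) (abel_radius k + 1 / abel_radius k) x) \<longlonglongrightarrow> gap_sq (cos \<theta>) 2 x"
    unfolding gap_sq_def by (intro tendsto_intros) simp
  moreover have "gap_sq (cos \<theta>) 2 x \<noteq> 0"
    using assms by (simp add: gap_sq_two)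
  ultimately show ?thesis
    unfolding log_gap_eq_ln_gap_sq_two[OF assms] log_gap_approx_def by (intro tendsto_intros) simp_all
qed

lemma log_gap_le_ln_4: "log_gap \<theta> x \<le> ln 4"
proof (cases "cos x = cos \<theta>")
  case False
  have "\<bar>cos x - cos \<theta>\<bar> \<le> 2"
    using abs_cos_le_one[of x] abs_cos_le_one[of \<theta>] by linarith
  with False show ?thesis
    unfolding log_gap_def by simp
qed (simp add: log_gap_def)

lemma AE_uniform_arc_cos_neq: "AE x in uniform_arc. cos x \<noteq> cos \<theta>"
proof -
  have "AE x in uniform_arc. x \<in> {-pi..0} \<and> x \<noteq> - arccos (cos \<theta>)"
    using AE_lborel_singleton[of "- arccos (cos \<theta>)"]
    unfolding uniform_arc_def by (subst AE_density) (auto elim!: eventually_mono simp: indicator_def)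
  then show ?thesis
  proof eventually_elim
    case (elim x)
    then have "arccos (cos (- x)) = - x"
      by (intro arccos_cos) auto
    with elim show ?case
      by auto
  qed
qed

lemma integrable_log_gap: "integrable uniform_arc (log_gap \<theta>)"
  and integral_log_gap: "integral\<^sup>L uniform_arc (log_gap \<theta>) = 0"
proof -
  have "integrable uniform_arc (\<lambda>x. - log_gap_approx \<theta> k x)" for k
    by (simp add: integrable_uniform_arc_continuous continuous_log_gap_approx)
  moreover have "AE x in uniform_arc. incseq (\<lambda>k. - log_gap_approx \<theta> k x)"
    by (intro AE_I2) (auto simp: incseq_def intro: log_gap_approx_antimono)
  moreover have "AE x in uniform_arc. (\<lambda>k. - log_gap_approx \<theta> k x) \<longlonglongrightarrow> - log_gap \<theta> x"
    using AE_uniform_arc_cos_neq[of \<theta>]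
    by eventually_elim (intro tendsto_intros log_gap_approx_tendsto)
  moreover have "(\<lambda>k. \<integral>x. - log_gap_approx \<theta> k x \<partial>uniform_arc) \<longlonglongrightarrow> 0"
  proof -
    have "(\<lambda>k. ln (abel_radius k)) \<longlonglongrightarrow> ln 1"
      by (intro tendsto_intros abel_radius_tendsto) simp
    then show ?thesis
      using integral_log_gap_approx_mult_cos[of \<theta> _ 0] by simp
  qed
  moreover have "(\<lambda>x. - log_gap \<theta> x) \<in> borel_measurable uniform_arc"
    by measurable
  ultimately have "integrable uniform_arc (\<lambda>x. - log_gap \<theta> x)"
      and "(\<integral>x. - log_gap \<theta> x \<partial>uniform_arc) = 0"
    by (rule integrable_monotone_convergence integral_monotone_convergence)+
  then show "integrable uniform_arc (log_gap \<theta>)" and "integral\<^sup>L uniform_arc (log_gap \<theta>) = 0"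
    by simp_all
qed

lemma integral_log_gap_mult_cos:
  assumes "m \<noteq> 0"
  shows "(\<integral>x. log_gap \<theta> x * cos (real m * x) \<partial>uniform_arc) = - cos (real m * \<theta>) / real m"
proof -
  have "(\<lambda>k. \<integral>x. log_gap_approx \<theta> k x * cos (real m * x) \<partial>uniform_arc) \<longlonglongrightarrow>
      (\<integral>x. log_gap \<theta> x * cos (real m * x) \<partial>uniform_arc)"
  proof (rule integral_dominated_convergence)
    show "integrable uniform_arc (\<lambda>x. \<bar>log_gap_approx \<theta> 0 x\<bar> + \<bar>log_gap \<theta> x\<bar>)"
      using integrable_log_gap[of \<theta>]
      by (simp add: integrable_uniform_arc_continuous continuous_log_gap_approx)
    show "AE x in uniform_arc. (\<lambda>k. log_gap_approx \<theta> k x * cos (real m * x)) \<longlonglongrightarrow> log_gap \<theta> x * cos (real m * x)"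
      using AE_uniform_arc_cos_neq[of \<theta>]
      by eventually_elim (intro tendsto_intros log_gap_approx_tendsto)
    show "AE x in uniform_arc. norm (log_gap_approx \<theta> k x * cos (real m * x)) \<le>
        \<bar>log_gap_approx \<theta> 0 x\<bar> + \<bar>log_gap \<theta> x\<bar>" for k
      using AE_uniform_arc_cos_neq[of \<theta>]
    proof eventually_elim
      case (elim x)
      have "\<bar>log_gap_approx \<theta> k x\<bar> \<le> \<bar>log_gap_approx \<theta> 0 x\<bar> + \<bar>log_gap \<theta> x\<bar>"
        using log_gap_le_approx[OF elim, of k] log_gap_approx_antimono[of 0 k \<theta> x] by linarith
      moreover have "\<bar>log_gap_approx \<theta> k x * cos (real m * x)\<bar> \<le> \<bar>log_gap_approx \<theta> k x\<bar>"
        by (simp add: abs_mult mult_left_le)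
      ultimately show ?case
        by simp
    qed
  qed simp_all
  moreover have "(\<lambda>k. \<integral>x. log_gap_approx \<theta> k x * cos (real m * x) \<partial>uniform_arc) \<longlonglongrightarrow>
      - cos (real m * \<theta>) * 1 ^ m / real m"
  proof -
    have "(\<lambda>k. - cos (real m * \<theta>) * abel_radius k ^ m / real m) \<longlonglongrightarrow> - cos (real m * \<theta>) * 1 ^ m / real m"
      using assms by (intro tendsto_intros abel_radius_tendsto) simp
    then show ?thesis
      using assms by (simp add: integral_log_gap_approx_mult_cos)
  qed
  ultimately show ?thesis
    using LIMSEQ_unique by fastforce
qed

lemma AE_ln_abs_cos_diff_eq: "AE x in uniform_arc. ln \<bar>cos x - cos \<theta>\<bar> = log_gap \<theta> x - ln 2"
  using AE_uniform_arc_cos_neq[of \<theta>] by eventually_elim (simp add: log_gap_def ln_mult)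

lemma integrable_ln_abs_cos_diff: "integrable uniform_arc (\<lambda>x. ln \<bar>cos x - cos \<theta>\<bar>)"
proof -
  have "integrable uniform_arc (\<lambda>x. log_gap \<theta> x - ln 2)"
    using integrable_log_gap by simp
  then show ?thesis
    by (rule integrable_cong_AE_imp) (use AE_ln_abs_cos_diff_eq[of \<theta>] in \<open>auto elim: eventually_mono\<close>)
qed

lemma integral_ln_abs_cos_diff_mult_cos:
  assumes "m \<noteq> 0"
  shows "(\<integral>x. ln \<bar>cos x - cos \<theta>\<bar> * cos (real m * x) \<partial>uniform_arc) = - cos (real m * \<theta>) / real m"
proof -
  have "integrable uniform_arc (\<lambda>x. log_gap \<theta> x * cos (real m * x))"
    using integrable_log_gap[of \<theta>]
    by (rule Bochner_Integration.integrable_bound) (auto simp: abs_mult mult_left_le)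
  moreover have "integrable uniform_arc (\<lambda>x. cos (real m * x))"
    by (intro integrable_uniform_arc_continuous continuous_intros)
  moreover have "(\<integral>x. ln \<bar>cos x - cos \<theta>\<bar> * cos (real m * x) \<partial>uniform_arc) =
      (\<integral>x. log_gap \<theta> x * cos (real m * x) - ln 2 * cos (real m * x) \<partial>uniform_arc)"
    using AE_ln_abs_cos_diff_eq[of \<theta>]
    by (intro integral_cong_AE) (auto elim!: eventually_mono simp: left_diff_distrib)
  ultimately show ?thesis
    using assms by (simp add: integral_log_gap_mult_cos integral_uniform_arc_cos_nat)
qed

lemma integral_abs_ln_abs_cos_diff_le:
  "(\<integral>x. \<bar>ln \<bar>cos x - cos \<theta>\<bar>\<bar> \<partial>uniform_arc) \<le> 2 * ln 4 + ln 2"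
proof -
  have "(\<integral>x. \<bar>ln \<bar>cos x - cos \<theta>\<bar>\<bar> \<partial>uniform_arc) \<le> (\<integral>x. 2 * ln 4 - log_gap \<theta> x + ln 2 \<partial>uniform_arc)"
  proof (rule integral_mono_AE)
    show "integrable uniform_arc (\<lambda>x. \<bar>ln \<bar>cos x - cos \<theta>\<bar>\<bar>)"
      using integrable_ln_abs_cos_diff by auto
    show "integrable uniform_arc (\<lambda>x. 2 * ln 4 - log_gap \<theta> x + ln 2)"
      using integrable_log_gap by auto
    show "AE x in uniform_arc. \<bar>ln \<bar>cos x - cos \<theta>\<bar>\<bar> \<le> 2 * ln 4 - log_gap \<theta> x + ln 2"
      using AE_ln_abs_cos_diff_eq[of \<theta>]
    proof eventually_elim
      case (elim x)
      show ?case
        unfolding elim using log_gap_le_ln_4[of \<theta> x] ln_ge_zero[of 2] ln_ge_zero[of 4] by linarith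
    qed
  qed
  also have "\<dots> = 2 * ln 4 + ln 2"
    using integrable_log_gap[of \<theta>] integral_log_gap[of \<theta>] uniform_arc.prob_space by simp
  finally show ?thesis .
qed

section \<open>Potentials off E\<close>

lemma ln_norm_diff_cos_eq:
  assumes "z \<notin> E_int"
  shows "ln (norm (z - of_real (cos x))) =
    ln (norm (phi z)) - ln 2 + ln (norm (1 - 2 * (1 / phi z) * of_real (cos x) + (1 / phi z)\<^sup>2))"
proof -
  define w where "w = phi z"
  define y where "y = 1 - 2 * (1 / w) * of_real (cos x) + (1 / w)\<^sup>2"
  have "w \<noteq> 0"
    unfolding w_def by (rule phi_nonzero)
  moreover have "z = (w + 1 / w) / 2"
    using phi_add_inverse[of z] by (simp add: w_def)
  ultimately have factor: "z - of_real (cos x) = (w / 2) * y"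
    unfolding y_def by (simp add: field_simps power2_eq_square)
  have "y \<noteq> 0"
  proof
    assume "y = 0"
    then have "z \<in> E_int"
      using factor unfolding E_int_def by auto
    with assms show False
      by simp
  qed
  with \<open>w \<noteq> 0\<close> show ?thesis
    unfolding factor by (simp add: norm_mult norm_divide ln_mult ln_div y_def w_def)
qed

lemma ln_norm_diff_cos_sums:
  assumes "z \<notin> E_int"
  shows "(\<lambda>n. 2 * cos (real n * x) * Re ((1 / phi z) ^ n) / real n)
           sums (ln (norm (phi z)) - ln 2 - ln (norm (z - of_real (cos x))))"
  using ln_norm_quadratic_cos_sums[OF norm_inverse_phi_lt_1[OF assms], of x]
  unfolding ln_norm_diff_cos_eq[OF assms] by simp

lemma abs_ln_norm_diff_cos_le:
  assumes "z \<notin> E_int"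
  shows "\<bar>ln (norm (z - of_real (cos x)))\<bar> \<le> ln (norm (phi z)) + ln 2 + 2 / (1 - norm (1 / phi z))"
proof -
  define q where "q = 1 / phi z"
  have q: "norm q < 1"
    unfolding q_def using assms by (rule norm_inverse_phi_lt_1)
  have geometric: "(\<lambda>n. 2 * norm q ^ n) sums (2 * (1 / (1 - norm q)))"
    using q by (intro sums_mult geometric_sums) auto
  have "norm (\<Sum>n. 2 * cos (real n * x) * Re (q ^ n) / real n) \<le> (\<Sum>n. 2 * norm q ^ n)"
    by (rule norm_suminf_le) (use abs_cos_mult_Re_power_divide_le geometric in \<open>auto simp: sums_iff\<close>)
  also have "\<dots> = 2 / (1 - norm q)"
    using geometric by (simp add: sums_iff)
  finally have "\<bar>ln (norm (phi z)) - ln 2 - ln (norm (z - of_real (cos x)))\<bar> \<le> 2 / (1 - norm q)"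
    using ln_norm_diff_cos_sums[OF assms, of x] by (simp add: sums_iff q_def)
  moreover have "0 < ln (norm (phi z))"
    using assms by (intro ln_gt_zero norm_phi_gt_1)
  ultimately show ?thesis
    unfolding q_def using ln_gt_zero[of 2] by linarith
qed

lemma
  assumes "z \<notin> E_int"
  shows integrable_ln_norm_diff_cos_mult_cos:
      "integrable uniform_arc (\<lambda>x. ln (norm (z - of_real (cos x))) * cos (real m * x))"
    and integral_ln_norm_diff_cos_mult_cos:
      "(\<integral>x. ln (norm (z - of_real (cos x))) * cos (real m * x) \<partial>uniform_arc) =
        (if m = 0 then ln (norm (phi z)) - ln 2 else - Re ((1 / phi z) ^ m) / real m)"
proof -
  define q where "q = 1 / phi z"
  define A where "A = ln (norm (phi z)) - ln 2"
  define a where "a n = 2 * Re (q ^ n) / real n" for n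
  have q: "norm q < 1"
    unfolding q_def using assms by (rule norm_inverse_phi_lt_1)
  have a_sums: "(\<lambda>n. a n * cos (real n * x)) sums (A - ln (norm (z - of_real (cos x))))" for x
    using ln_norm_diff_cos_sums[OF assms, of x] by (simp add: a_def q_def A_def mult_ac)
  have a_bound: "\<bar>a n\<bar> \<le> 2 * norm q ^ n" for n
    using abs_cos_mult_Re_power_divide_le[of 0 q n] by (simp add: a_def)
  note series = integrable_uniform_arc_cosine_series[OF a_sums a_bound norm_ge_zero q, of m]
    integral_uniform_arc_cosine_series[OF a_sums a_bound norm_ge_zero q, of m]
  have "integrable uniform_arc (\<lambda>x. (A - ln (norm (z - of_real (cos x)))) * cos (real m * x))"
    and "(\<integral>x. (A - ln (norm (z - of_real (cos x)))) * cos (real m * x) \<partial>uniform_arc) =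
      (if m = 0 then 0 else Re (q ^ m) / real m)"
    using series by (simp_all add: a_def)
  moreover have "integrable uniform_arc (\<lambda>x. A * cos (real m * x))"
    by (intro integrable_uniform_arc_continuous continuous_intros)
  moreover have "ln (norm (z - of_real (cos x))) * cos (real m * x) =
      A * cos (real m * x) - (A - ln (norm (z - of_real (cos x)))) * cos (real m * x)" for x
    by (simp add: algebra_simps)
  ultimately show "integrable uniform_arc (\<lambda>x. ln (norm (z - of_real (cos x))) * cos (real m * x))"
    and "(\<integral>x. ln (norm (z - of_real (cos x))) * cos (real m * x) \<partial>uniform_arc) =
        (if m = 0 then ln (norm (phi z)) - ln 2 else - Re ((1 / phi z) ^ m) / real m)"
    by (simp_all add: integral_uniform_arc_cos_nat A_def q_def)
qed

text \<open>For t in E, E_angle t is the angle in [0, pi] with cos (E_angle t) = t, so that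
  chebyshev_T n is the Chebyshev polynomial T_n on E. Clamping Re t to [-1, 1] extends both
  continuously to the whole plane.\<close>

definition E_angle :: "complex \<Rightarrow> real" where
  "E_angle t = arccos (max (-1) (min 1 (Re t)))"

definition chebyshev_T :: "nat \<Rightarrow> complex \<Rightarrow> real" where
  "chebyshev_T n t = cos (real n * E_angle t)"

lemma borel_measurable_E_angle [measurable]: "E_angle \<in> borel_measurable borel"
proof (rule borel_measurable_continuous_onI)
  show "continuous_on UNIV E_angle"
    unfolding E_angle_def[abs_def] by (intro continuous_intros) auto
qed

lemma borel_measurable_chebyshev_T [measurable]: "chebyshev_T n \<in> borel_measurable borel"
  unfolding chebyshev_T_def[abs_def] by measurable

lemma cos_E_angle: "t \<in> E_int \<Longrightarrow> of_real (cos (E_angle t)) = t"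
  unfolding E_int_def E_angle_def by auto

lemma
  fixes \<sigma> :: "complex measure"
  assumes "finite_measure \<sigma>" and sets_\<sigma> [measurable_cong]: "sets \<sigma> = sets borel"
    and on_E: "AE t in \<sigma>. t \<in> E_int" and z: "z \<notin> E_int"
  shows integrable_ln_norm_diff_E: "integrable \<sigma> (\<lambda>t. ln (norm (z - t)))"
    and ln_norm_diff_chebyshev_sums:
      "(\<lambda>n. 2 * Re ((1 / phi z) ^ n) / real n * integral\<^sup>L \<sigma> (chebyshev_T n)) sums
         ((ln (norm (phi z)) - ln 2) * measure \<sigma> (space \<sigma>) - (\<integral>t. ln (norm (z - t)) \<partial>\<sigma>))"
proof -
  interpret finite_measure \<sigma>
    by fact
  define q where "q = 1 / phi z"
  define A where "A = ln (norm (phi z)) - ln 2"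
  have q: "norm q < 1"
    unfolding q_def using z by (rule norm_inverse_phi_lt_1)
  define f where "f n t = 2 * cos (real n * E_angle t) * Re (q ^ n) / real n" for n t
  have f_measurable: "f n \<in> borel_measurable \<sigma>" for n
    unfolding f_def by measurable
  have f_sums: "AE t in \<sigma>. (\<lambda>n. f n t) sums (A - ln (norm (z - t)))"
    using on_E
  proof eventually_elim
    case (elim t)
    then show ?case
      using ln_norm_diff_cos_sums[OF z, of "E_angle t"] by (simp add: f_def q_def A_def cos_E_angle)
  qed
  have f_bound: "\<bar>f n t\<bar> \<le> 2 * norm q ^ n" for n t
    unfolding f_def by (rule abs_cos_mult_Re_power_divide_le)
  note geometric = sums_integral_geometric_bound[OF \<open>finite_measure \<sigma>\<close> f_measurable _ f_sums f_bound
      norm_ge_zero q]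
  have integrable_A_minus: "integrable \<sigma> (\<lambda>t. A - ln (norm (z - t)))"
    by (rule geometric(1)) measurable
  have sums: "(\<lambda>n. integral\<^sup>L \<sigma> (f n)) sums (\<integral>t. A - ln (norm (z - t)) \<partial>\<sigma>)"
    by (rule geometric(2)) measurable
  from Bochner_Integration.integrable_diff[OF integrable_const[of A] integrable_A_minus]
  show integrable: "integrable \<sigma> (\<lambda>t. ln (norm (z - t)))"
    by simp
  from sums have "(\<lambda>n. integral\<^sup>L \<sigma> (f n)) sums (A * measure \<sigma> (space \<sigma>) - (\<integral>t. ln (norm (z - t)) \<partial>\<sigma>))"
    using integrable by (simp add: mult.commute)
  moreover have "f n = (\<lambda>t. 2 * Re (q ^ n) / real n * chebyshev_T n t)" for n
    by (auto simp: fun_eq_iff f_def chebyshev_T_def)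
  ultimately show "(\<lambda>n. 2 * Re ((1 / phi z) ^ n) / real n * integral\<^sup>L \<sigma> (chebyshev_T n)) sums
      ((ln (norm (phi z)) - ln 2) * measure \<sigma> (space \<sigma>) - (\<integral>t. ln (norm (z - t)) \<partial>\<sigma>))"
    by (simp add: q_def A_def)
qed

lemma log_potential_eq_neg_integral: "log_potential \<sigma> z = - (\<integral>t. ln (norm (z - t)) \<partial>\<sigma>)"
  unfolding log_potential_def by (simp add: ln_inverse flip: inverse_eq_divide)

lemma sets_tau_E [simp, measurable_cong]: "sets tau_E = sets borel"
  unfolding tau_E_def by simp

lemma
  assumes "z \<notin> E_int"
  shows integrable_ln_inverse_norm_diff_tau_E: "integrable tau_E (\<lambda>t. ln (1 / norm (z - t)))"
    and log_potential_tau_E: "log_potential tau_E z = ln 2 - ln (norm (phi z))"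
proof -
  have cos_measurable: "(\<lambda>x. complex_of_real (cos x)) \<in> uniform_arc \<rightarrow>\<^sub>M borel"
    by simp
  have "integrable uniform_arc (\<lambda>x. ln (norm (z - of_real (cos x))))"
    using integrable_ln_norm_diff_cos_mult_cos[OF assms, of 0] by simp
  then have "integrable uniform_arc (\<lambda>x. ln (1 / norm (z - of_real (cos x))))"
    by (simp add: ln_inverse flip: inverse_eq_divide)
  then show "integrable tau_E (\<lambda>t. ln (1 / norm (z - t)))"
    unfolding tau_E_eq_distr by (subst integrable_distr_eq[OF cos_measurable]) auto
  have "log_potential tau_E z = - (\<integral>x. ln (norm (z - of_real (cos x))) \<partial>uniform_arc)"
    unfolding log_potential_eq_neg_integral tau_E_eq_distr by (subst integral_distr[OF cos_measurable]) auto
  then show "log_potential tau_E z = ln 2 - ln (norm (phi z))"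
    using integral_ln_norm_diff_cos_mult_cos[OF assms, of 0] by simp
qed

section \<open>Sums of measures and exchange of integrals\<close>

lemma sets_measure_add [simp, measurable_cong]: "sets (measure_add M N) = sets M"
  unfolding measure_add_def by (simp add: sets.space_closed sets.sigma_sets_eq)

lemma space_measure_add [simp]: "space (measure_add M N) = space M"
  unfolding measure_add_def by simp

context
  fixes M N :: "'a measure"
  assumes sets_N: "sets N = sets M"
begin

lemma emeasure_measure_add:
  assumes "A \<in> sets M"
  shows "emeasure (measure_add M N) A = emeasure M A + emeasure N A"
  unfolding measure_add_def
proof (rule emeasure_measure_of_sigma)
  show "countably_additive (sets M) (\<lambda>A. emeasure M A + emeasure N A)"
    unfolding countably_additive_def
  proof safe
    fix A :: "nat \<Rightarrow> 'a set"
    assume "range A \<subseteq> sets M" "disjoint_family A" "\<Union> (range A) \<in> sets M"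
    then show "(\<Sum>i. emeasure M (A i) + emeasure N (A i)) = emeasure M (\<Union> (range A)) + emeasure N (\<Union> (range A))"
      using sets_N by (simp add: suminf_add[symmetric] suminf_emeasure)
  qed
qed (use assms sets.sigma_algebra_axioms in \<open>auto simp: positive_def\<close>)

lemma nn_integral_measure_add:
  assumes "f \<in> borel_measurable M"
  shows "integral\<^sup>N (measure_add M N) f = integral\<^sup>N M f + integral\<^sup>N N f"
  using assms
proof (induct rule: borel_measurable_induct)
  case (cong f g)
  have "space N = space M"
    using sets_N by (rule sets_eq_imp_space_eq)
  with cong have "integral\<^sup>N L f = integral\<^sup>N L g" if "space L = space M" for L
    using that by (intro nn_integral_cong) simp
  with cong \<open>space N = space M\<close> show ?case
    by simp
next
  case (set A)
  then show ?case
    using sets_N by (simp add: emeasure_measure_add)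
next
  case (mult u c)
  then show ?case
    using sets_N by (simp add: nn_integral_cmult distrib_left cong: measurable_cong_sets)
next
  case (add u v)
  then show ?case
    using sets_N by (simp add: nn_integral_add algebra_simps cong: measurable_cong_sets)
next
  case (seq U)
  have measurable: "U i \<in> borel_measurable (measure_add M N)" "U i \<in> borel_measurable N" for i
    using seq sets_N by (simp_all cong: measurable_cong_sets)
  have "(\<Squnion> range U) = (\<lambda>x. SUP i. U i x)"
    by (auto simp: fun_eq_iff image_comp)
  moreover have "(SUP i. integral\<^sup>N M (U i) + integral\<^sup>N N (U i)) =
      (SUP i. integral\<^sup>N M (U i)) + (SUP i. integral\<^sup>N N (U i))"
    using seq measurable by (intro ennreal_SUP_add) (auto intro!: nn_integral_mono simp: incseq_def le_fun_def)
  ultimately show ?case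
    using seq measurable by (simp add: nn_integral_monotone_convergence_SUP)
qed

lemma
  fixes f :: "'a \<Rightarrow> real"
  assumes M: "integrable M f" and N: "integrable N f"
  shows integrable_measure_add: "integrable (measure_add M N) f"
    and integral_measure_add: "integral\<^sup>L (measure_add M N) f = integral\<^sup>L M f + integral\<^sup>L N f"
proof -
  have [measurable]: "f \<in> borel_measurable M" "f \<in> borel_measurable N"
    using M N by simp_all
  then show integrable: "integrable (measure_add M N) f"
    using M N by (simp add: integrable_iff_bounded nn_integral_measure_add)
  have finite: "(\<integral>\<^sup>+x. ennreal (g x) \<partial>L) < \<infinity>"
    if "integrable L f" "g = f \<or> g = (\<lambda>x. - f x)" for L g
  proof -
    have "(\<integral>\<^sup>+x. ennreal (g x) \<partial>L) \<le> (\<integral>\<^sup>+x. ennreal (norm (f x)) \<partial>L)"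
      using that(2) by (intro nn_integral_mono ennreal_leI) auto
    also have "\<dots> < \<infinity>"
      using that(1) by (simp add: integrable_iff_bounded)
    finally show ?thesis .
  qed
  show "integral\<^sup>L (measure_add M N) f = integral\<^sup>L M f + integral\<^sup>L N f"
    unfolding real_lebesgue_integral_def[OF integrable] real_lebesgue_integral_def[OF M]
      real_lebesgue_integral_def[OF N]
    using finite[OF M] finite[OF N] by (simp add: nn_integral_measure_add enn2real_plus)
qed

end

lemma log_potential_measure_add:
  assumes "sets \<nu> = sets \<sigma>"
    and "integrable \<sigma> (\<lambda>t. ln (1 / norm (z - t)))" "integrable \<nu> (\<lambda>t. ln (1 / norm (z - t)))"
  shows "log_potential (measure_add \<sigma> \<nu>) z = log_potential \<sigma> z + log_potential \<nu> z"
  unfolding log_potential_def using assms by (rule integral_measure_add)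

lemma
  fixes g :: "'a \<Rightarrow> 'b \<Rightarrow> real"
  assumes "finite_measure M" "finite_measure N"
    and measurable: "(\<lambda>(t, x). g t x) \<in> borel_measurable (M \<Otimes>\<^sub>M N)"
    and integrable: "AE t in M. integrable N (g t)"
    and bounded: "AE t in M. (\<integral>x. \<bar>g t x\<bar> \<partial>N) \<le> K"
  shows integrable_integral_bounded_kernel: "integrable N (\<lambda>x. \<integral>t. g t x \<partial>M)"
    and integral_integral_swap_bounded_kernel:
      "(\<integral>x. (\<integral>t. g t x \<partial>M) \<partial>N) = (\<integral>t. (\<integral>x. g t x \<partial>N) \<partial>M)"
proof -
  interpret M: finite_measure M
    by fact
  interpret N: finite_measure N
    by fact
  interpret pair_sigma_finite M N ..
  have "integrable (M \<Otimes>\<^sub>M N) (\<lambda>(t, x). g t x)"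
  proof (rule Fubini_integrable[OF measurable])
    show "integrable M (\<lambda>t. \<integral>x. norm (case (t, x) of (t, x) \<Rightarrow> g t x) \<partial>N)"
      using bounded measurable
      by (intro M.integrable_const_bound[where B=K]) (auto elim!: eventually_mono)
  qed (use integrable in simp)
  then show "integrable N (\<lambda>x. \<integral>t. g t x \<partial>M)"
    and "(\<integral>x. (\<integral>t. g t x \<partial>M) \<partial>N) = (\<integral>t. (\<integral>x. g t x \<partial>N) \<partial>M)"
    using integrable_snd[of g] Fubini_integral[of g] by simp_all
qed

section \<open>Chebyshev moments of the balayage\<close>

definition real_shell :: "real \<Rightarrow> real \<Rightarrow> complex set" where
  "real_shell d M = of_real ` {r. 1 + d \<le> \<bar>r\<bar> \<and> \<bar>r\<bar> \<le> M}"

lemma compact_outside_interval_subset_real_shell: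
  fixes F :: "real set"
  assumes "compact F" "F \<inter> {-1..1} = {}"
  obtains d M where "0 < d" "of_real ` F \<subseteq> real_shell d M"
proof -
  obtain M where M: "\<forall>r\<in>F. \<bar>r\<bar> \<le> M"
    using compact_imp_bounded[OF assms(1)] unfolding bounded_real by auto
  obtain d where "0 < d" "\<forall>r\<in>F. 1 + d \<le> \<bar>r\<bar>"
  proof (cases "F = {}")
    case False
    have "compact (abs ` F)"
      using assms(1) by (intro compact_continuous_image continuous_intros)
    then obtain s where s: "s \<in> abs ` F" "\<forall>u\<in>abs ` F. s \<le> u"
      using compact_attains_inf False by blast
    moreover have "1 < s"
    proof -
      obtain r where "r \<in> F" "s = \<bar>r\<bar>"
        using s(1) by auto
      moreover from \<open>r \<in> F\<close> have "r \<notin> {-1..1}"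
        using assms(2) by auto
      ultimately show ?thesis
        by auto
    qed
    ultimately show ?thesis
      using that[of "s - 1"] by auto
  qed (use that[of 1] in simp)
  with M show ?thesis
    using that[of d M] unfolding real_shell_def by auto
qed

lemma
  assumes "0 < d" "t \<in> real_shell d M"
  shows real_shell_not_E: "t \<notin> E_int"
    and phi_real_shell_Reals: "phi t \<in> \<real>"
    and norm_inverse_phi_real_shell_le: "norm (1 / phi t) \<le> 1 / (1 + d)"
    and norm_phi_real_shell_le: "norm (phi t) \<le> 2 * M"
proof -
  obtain r where r: "t = of_real r" "1 + d \<le> \<bar>r\<bar>" "\<bar>r\<bar> \<le> M"
    using assms(2) unfolding real_shell_def by auto
  then have "1 < \<bar>r\<bar>"
    using assms(1) by simp
  then show "t \<notin> E_int"
    unfolding r(1) E_int_def by auto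
  define s where "s = r + sgn r * sqrt (r\<^sup>2 - 1)"
  have phi_t: "phi t = of_real s"
    unfolding r(1) s_def using \<open>1 < \<bar>r\<bar>\<close> by (rule phi_of_real)
  then show "phi t \<in> \<real>"
    by simp
  have "0 \<le> r\<^sup>2 - 1"
    using abs_square_less_1[of r] \<open>1 < \<bar>r\<bar>\<close> by linarith
  then have sqrt_nonneg: "0 \<le> sqrt (r\<^sup>2 - 1)" and "sqrt (r\<^sup>2 - 1) \<le> \<bar>r\<bar>"
    by (auto intro: real_le_lsqrt)
  moreover have "\<bar>s\<bar> = \<bar>r\<bar> + sqrt (r\<^sup>2 - 1)"
  proof (cases "r > 0")
    case False
    with \<open>1 < \<bar>r\<bar>\<close> have "r < 0"
      by auto
    with sqrt_nonneg have "s = - (\<bar>r\<bar> + sqrt (r\<^sup>2 - 1))"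
      by (simp add: s_def)
    with sqrt_nonneg show ?thesis
      by linarith
  qed (use sqrt_nonneg in \<open>simp add: s_def\<close>)
  ultimately have "1 + d \<le> \<bar>s\<bar>" "\<bar>s\<bar> \<le> 2 * M"
    using r by linarith+
  then show "norm (1 / phi t) \<le> 1 / (1 + d)" "norm (phi t) \<le> 2 * M"
    using assms(1) by (auto simp: phi_t norm_divide intro: divide_left_mono)
qed

lemma ln_norm_phi_real_shell_le:
  assumes "0 < d" "t \<in> real_shell d M"
  shows "\<bar>ln (norm (phi t))\<bar> \<le> ln (2 * M)"
proof -
  have "1 < norm (phi t)"
    using real_shell_not_E[OF assms] by (rule norm_phi_gt_1)
  moreover have "norm (phi t) \<le> 2 * M"
    using assms by (rule norm_phi_real_shell_le)
  ultimately have "0 < ln (norm (phi t))" "ln (norm (phi t)) \<le> ln (2 * M)"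
    by (auto intro!: ln_gt_zero ln_mono)
  then show ?thesis
    by simp
qed

definition log_cos_kernel :: "nat \<Rightarrow> complex \<Rightarrow> real \<Rightarrow> real" where
  "log_cos_kernel m t x = ln (norm (of_real (cos x) - t)) * cos (real m * x)"

lemma borel_measurable_log_cos_kernel_pair:
  "(\<lambda>(t, x). log_cos_kernel m t x) \<in> borel_measurable (borel \<Otimes>\<^sub>M borel)"
  unfolding log_cos_kernel_def by measurable

lemma borel_measurable_log_cos_kernel:
  assumes "sets \<sigma> = sets borel"
  shows "(\<lambda>(t, x). log_cos_kernel m t x) \<in> borel_measurable (\<sigma> \<Otimes>\<^sub>M uniform_arc)"
proof -
  have "sets (\<sigma> \<Otimes>\<^sub>M uniform_arc) = sets (borel \<Otimes>\<^sub>M borel)"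
    using assms by (intro sets_pair_measure_cong) simp_all
  then show ?thesis
    using borel_measurable_log_cos_kernel_pair by (simp cong: measurable_cong_sets)
qed

lemma borel_measurable_integral_log_cos_kernel:
  "(\<lambda>t. integral\<^sup>L uniform_arc (log_cos_kernel m t)) \<in> borel_measurable borel"
  using borel_measurable_log_cos_kernel_pair
  by (intro uniform_arc.borel_measurable_lebesgue_integral) simp

lemma integral_log_cos_kernel:
  "(\<integral>t. log_cos_kernel m t x \<partial>\<sigma>) = - log_potential \<sigma> (of_real (cos x)) * cos (real m * x)"
  unfolding log_cos_kernel_def log_potential_eq_neg_integral by simp

lemma
  assumes "t \<in> E_int"
  shows integrable_log_cos_kernel_E: "integrable uniform_arc (log_cos_kernel m t)"
    and integral_abs_log_cos_kernel_E_le: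
      "(\<integral>x. \<bar>log_cos_kernel m t x\<bar> \<partial>uniform_arc) \<le> 2 * ln 4 + ln 2"
    and integral_log_cos_kernel_E:
      "m \<noteq> 0 \<Longrightarrow> integral\<^sup>L uniform_arc (log_cos_kernel m t) = - chebyshev_T m t / real m"
proof -
  have kernel: "log_cos_kernel m t x = ln \<bar>cos x - cos (E_angle t)\<bar> * cos (real m * x)" for x
  proof -
    have "of_real (cos x) - t = of_real (cos x - cos (E_angle t))"
      using cos_E_angle[OF assms] by simp
    then show ?thesis
      unfolding log_cos_kernel_def by (simp only: norm_of_real)
  qed
  show integrable: "integrable uniform_arc (log_cos_kernel m t)"
    unfolding kernel using integrable_ln_abs_cos_diff[of "E_angle t"]
    by (rule Bochner_Integration.integrable_bound) (auto simp: abs_mult mult_left_le)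
  have "(\<integral>x. \<bar>log_cos_kernel m t x\<bar> \<partial>uniform_arc) \<le> (\<integral>x. \<bar>ln \<bar>cos x - cos (E_angle t)\<bar>\<bar> \<partial>uniform_arc)"
    using integrable_abs[OF integrable] integrable_abs[OF integrable_ln_abs_cos_diff[of "E_angle t"]]
    by (intro integral_mono) (auto simp: kernel abs_mult mult_left_le)
  then show "(\<integral>x. \<bar>log_cos_kernel m t x\<bar> \<partial>uniform_arc) \<le> 2 * ln 4 + ln 2"
    using integral_abs_ln_abs_cos_diff_le by (rule order_trans)
  show "m \<noteq> 0 \<Longrightarrow> integral\<^sup>L uniform_arc (log_cos_kernel m t) = - chebyshev_T m t / real m"
    unfolding kernel chebyshev_T_def by (simp add: integral_ln_abs_cos_diff_mult_cos)
qed

lemma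
  assumes "0 < d" "t \<in> real_shell d M"
  shows integrable_log_cos_kernel_real_shell: "integrable uniform_arc (log_cos_kernel m t)"
    and integral_abs_log_cos_kernel_real_shell_le:
      "(\<integral>x. \<bar>log_cos_kernel m t x\<bar> \<partial>uniform_arc) \<le> ln (2 * M) + ln 2 + 2 / (1 - 1 / (1 + d))"
    and integral_log_cos_kernel_real_shell:
      "m \<noteq> 0 \<Longrightarrow> integral\<^sup>L uniform_arc (log_cos_kernel m t) = - Re ((1 / phi t) ^ m) / real m"
proof -
  have t: "t \<notin> E_int"
    using assms by (rule real_shell_not_E)
  have kernel: "log_cos_kernel m t = (\<lambda>x. ln (norm (t - of_real (cos x))) * cos (real m * x))"
    unfolding log_cos_kernel_def by (simp add: norm_minus_commute)
  show integrable: "integrable uniform_arc (log_cos_kernel m t)"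
    unfolding kernel using t by (rule integrable_ln_norm_diff_cos_mult_cos)
  show "m \<noteq> 0 \<Longrightarrow> integral\<^sup>L uniform_arc (log_cos_kernel m t) = - Re ((1 / phi t) ^ m) / real m"
    unfolding kernel using integral_ln_norm_diff_cos_mult_cos[OF t] by simp
  have "2 / (1 - norm (1 / phi t)) \<le> 2 / (1 - 1 / (1 + d))"
    using assms norm_inverse_phi_real_shell_le[OF assms] norm_inverse_phi_lt_1[OF t]
    by (intro divide_left_mono mult_pos_pos) auto
  then have "\<bar>log_cos_kernel m t x\<bar> \<le> ln (2 * M) + ln 2 + 2 / (1 - 1 / (1 + d))" for x
    using abs_ln_norm_diff_cos_le[OF t, of x] ln_norm_phi_real_shell_le[OF assms]
      mult_left_le[of "\<bar>cos (real m * x)\<bar>" "\<bar>ln (norm (t - of_real (cos x)))\<bar>"]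
    by (simp add: kernel abs_mult)
  then have "(\<integral>x. \<bar>log_cos_kernel m t x\<bar> \<partial>uniform_arc) \<le> (\<integral>x. ln (2 * M) + ln 2 + 2 / (1 - 1 / (1 + d)) \<partial>uniform_arc)"
    using integrable by (intro integral_mono) auto
  then show "(\<integral>x. \<bar>log_cos_kernel m t x\<bar> \<partial>uniform_arc) \<le> ln (2 * M) + ln 2 + 2 / (1 - 1 / (1 + d))"
    using uniform_arc.prob_space by simp
qed

lemma integral_integral_log_cos_kernel_E:
  fixes \<nu> :: "complex measure"
  assumes "finite_measure \<nu>" "sets \<nu> = sets borel" and on_E: "AE t in \<nu>. t \<in> E_int" and "m \<noteq> 0"
  shows "(\<integral>x. (\<integral>t. log_cos_kernel m t x \<partial>\<nu>) \<partial>uniform_arc) = - integral\<^sup>L \<nu> (chebyshev_T m) / real m"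
proof -
  have "(\<integral>x. (\<integral>t. log_cos_kernel m t x \<partial>\<nu>) \<partial>uniform_arc) =
      (\<integral>t. integral\<^sup>L uniform_arc (log_cos_kernel m t) \<partial>\<nu>)"
    using assms
    by (intro integral_integral_swap_bounded_kernel[OF _ uniform_arc.finite_measure_axioms
          borel_measurable_log_cos_kernel, where K="2 * ln 4 + ln 2"])
      (auto elim!: eventually_mono intro: integrable_log_cos_kernel_E integral_abs_log_cos_kernel_E_le)
  also have "\<dots> = (\<integral>t. - chebyshev_T m t / real m \<partial>\<nu>)"
    using assms borel_measurable_integral_log_cos_kernel
    by (intro integral_cong_AE) (auto elim!: eventually_mono simp: integral_log_cos_kernel_E)
  finally show ?thesis
    by simp
qed

lemma
  fixes \<mu> :: "complex measure"
  assumes "finite_measure \<mu>" "sets \<mu> = sets borel" and shell: "AE t in \<mu>. t \<in> real_shell d M"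
    and "0 < d"
  shows integrable_integral_log_cos_kernel_real_shell:
      "integrable uniform_arc (\<lambda>x. \<integral>t. log_cos_kernel m t x \<partial>\<mu>)"
    and integral_integral_log_cos_kernel_real_shell:
      "m \<noteq> 0 \<Longrightarrow> (\<integral>x. (\<integral>t. log_cos_kernel m t x \<partial>\<mu>) \<partial>uniform_arc) =
        - (\<integral>t. Re ((1 / phi t) ^ m) \<partial>\<mu>) / real m"
proof -
  have "AE t in \<mu>. integrable uniform_arc (log_cos_kernel m t)"
      and "AE t in \<mu>. (\<integral>x. \<bar>log_cos_kernel m t x\<bar> \<partial>uniform_arc) \<le> ln (2 * M) + ln 2 + 2 / (1 - 1 / (1 + d))"
    using shell \<open>0 < d\<close>
    by (auto elim!: eventually_mono intro: integrable_log_cos_kernel_real_shell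
        integral_abs_log_cos_kernel_real_shell_le)
  note swap = integrable_integral_bounded_kernel[OF \<open>finite_measure \<mu>\<close> uniform_arc.finite_measure_axioms
      borel_measurable_log_cos_kernel[OF \<open>sets \<mu> = sets borel\<close>] this]
    integral_integral_swap_bounded_kernel[OF \<open>finite_measure \<mu>\<close> uniform_arc.finite_measure_axioms
      borel_measurable_log_cos_kernel[OF \<open>sets \<mu> = sets borel\<close>] this]
  show "integrable uniform_arc (\<lambda>x. \<integral>t. log_cos_kernel m t x \<partial>\<mu>)"
    by (rule swap(1))
  assume "m \<noteq> 0"
  have "(\<integral>t. integral\<^sup>L uniform_arc (log_cos_kernel m t) \<partial>\<mu>) = (\<integral>t. - Re ((1 / phi t) ^ m) / real m \<partial>\<mu>)"
    using assms \<open>m \<noteq> 0\<close> borel_measurable_integral_log_cos_kernel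
    by (intro integral_cong_AE) (auto elim!: eventually_mono simp: integral_log_cos_kernel_real_shell)
  with swap(2) show "(\<integral>x. (\<integral>t. log_cos_kernel m t x \<partial>\<mu>) \<partial>uniform_arc) =
      - (\<integral>t. Re ((1 / phi t) ^ m) \<partial>\<mu>) / real m"
    by simp
qed

text \<open>The balayage identity of potentials on E, integrated against cos (m x) over the arc
  x in [-pi, 0], becomes an identity of m-th Chebyshev moments.\<close>
lemma chebyshev_moment_balayage:
  fixes \<mu> \<nu> :: "complex measure"
  assumes "finite_measure \<mu>" "sets \<mu> = sets borel" "AE t in \<mu>. t \<in> real_shell d M" "0 < d"
    and "finite_measure \<nu>" "sets \<nu> = sets borel" "AE t in \<nu>. t \<in> E_int"
    and potentials: "\<forall>x\<in>E_int. log_potential \<nu> x = log_potential \<mu> x + c"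
    and "m \<noteq> 0"
  shows "integral\<^sup>L \<nu> (chebyshev_T m) = (\<integral>t. Re ((1 / phi t) ^ m) \<partial>\<mu>)"
proof -
  have "(\<integral>t. log_cos_kernel m t x \<partial>\<nu>) = (\<integral>t. log_cos_kernel m t x \<partial>\<mu>) - c * cos (real m * x)" for x
    using potentials by (simp add: integral_log_cos_kernel E_int_def algebra_simps)
  moreover have "integrable uniform_arc (\<lambda>x. c * cos (real m * x))"
    by (intro integrable_uniform_arc_continuous continuous_intros)
  ultimately have "(\<integral>x. (\<integral>t. log_cos_kernel m t x \<partial>\<nu>) \<partial>uniform_arc) =
      (\<integral>x. (\<integral>t. log_cos_kernel m t x \<partial>\<mu>) \<partial>uniform_arc)"
    using integrable_integral_log_cos_kernel_real_shell[OF assms(1-4)] \<open>m \<noteq> 0\<close>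
    by (simp add: integral_uniform_arc_cos_nat)
  with \<open>m \<noteq> 0\<close> show ?thesis
    using integral_integral_log_cos_kernel_E[OF assms(5-7,9)]
      integral_integral_log_cos_kernel_real_shell[OF assms(1-4,9)] by simp
qed

section \<open>Potential of the balayage off E\<close>

lemma ln_norm_one_minus_inverse_phi_sums:
  assumes "z \<notin> E_int" "phi t \<in> \<real>"
  shows "(\<lambda>n. 2 * Re ((1 / phi z) ^ n) / real n * Re ((1 / phi t) ^ n))
           sums (- 2 * ln (norm (1 - 1 / (phi z * phi t))))"
proof -
  obtain a where a: "1 / phi t = of_real a"
    using assms(2) by (metis Reals_cases Reals_divide Reals_1)
  have norm_less: "norm (1 / phi z * (1 / phi t)) < 1"
    using norm_inverse_phi_mult_lt_1[OF assms(1), of t] by simp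
  have terms: "2 * Re ((1 / phi z) ^ n) / real n * Re ((1 / phi t) ^ n) =
      2 * (Re ((1 / phi z * (1 / phi t)) ^ n) / real n)" for n
  proof -
    have "(1 / phi z * (1 / phi t)) ^ n = (1 / phi z) ^ n * of_real (a ^ n)"
      unfolding a power_mult_distrib of_real_power ..
    moreover have "Re ((1 / phi t) ^ n) = a ^ n"
      unfolding a by (simp flip: of_real_power)
    ultimately show ?thesis
      by simp
  qed
  have "- 2 * ln (norm (1 - 1 / (phi z * phi t))) = 2 * - ln (norm (1 - 1 / phi z * (1 / phi t)))"
    by simp
  then show ?thesis
    unfolding terms by (metis sums_mult[OF ln_norm_one_minus_sums[OF norm_less]])
qed

lemma
  fixes \<mu> :: "complex measure"
  assumes "finite_measure \<mu>" "sets \<mu> = sets borel" and \<mu>_shell: "AE t in \<mu>. t \<in> real_shell d M"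
    and "0 < d" and z: "z \<notin> E_int"
  shows integrable_ln_norm_one_minus_inverse_phi:
      "integrable \<mu> (\<lambda>t. ln (norm (1 - 1 / (phi z * phi t))))"
    and integral_ln_norm_one_minus_inverse_phi_sums:
      "(\<lambda>n. 2 * Re ((1 / phi z) ^ n) / real n * (\<integral>t. Re ((1 / phi t) ^ n) \<partial>\<mu>))
         sums (- 2 * (\<integral>t. ln (norm (1 - 1 / (phi z * phi t))) \<partial>\<mu>))"
proof -
  define q where "q = 1 / phi z"
  define f where "f n t = 2 * Re (q ^ n) / real n * Re ((1 / phi t) ^ n)" for n t
  have f_measurable: "f n \<in> borel_measurable \<mu>" for n
    using assms(2) unfolding f_def by measurable
  have f_sums: "AE t in \<mu>. (\<lambda>n. f n t) sums (- 2 * ln (norm (1 - 1 / (phi z * phi t))))"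
    using \<mu>_shell
  proof eventually_elim
    case (elim t)
    show ?case
      unfolding f_def q_def using z phi_real_shell_Reals[OF \<open>0 < d\<close> elim]
      by (rule ln_norm_one_minus_inverse_phi_sums)
  qed
  have f_bound: "\<bar>f n t\<bar> \<le> 2 * norm q ^ n" for n t
  proof -
    have "\<bar>Re ((1 / phi t) ^ n)\<bar> \<le> 1"
      using abs_Re_le_cmod[of "(1 / phi t) ^ n"] norm_inverse_phi_le_1[of t]
      by (simp add: norm_power power_le_one order_trans)
    then have "\<bar>f n t\<bar> \<le> \<bar>2 * Re (q ^ n) / real n\<bar> * 1"
      unfolding f_def abs_mult[of _ "Re ((1 / phi t) ^ n)"] by (intro mult_left_mono) simp_all
    also have "\<dots> \<le> 2 * norm q ^ n"
      using abs_cos_mult_Re_power_divide_le[of 0 q n] by simp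
    finally show ?thesis .
  qed
  have q: "norm q < 1"
    unfolding q_def using z by (rule norm_inverse_phi_lt_1)
  note geometric = sums_integral_geometric_bound[OF \<open>finite_measure \<mu>\<close> f_measurable _ f_sums f_bound
      norm_ge_zero q]
  have "integrable \<mu> (\<lambda>t. - 2 * ln (norm (1 - 1 / (phi z * phi t))))"
    by (rule geometric(1)) (use assms(2) in measurable)
  then show "integrable \<mu> (\<lambda>t. ln (norm (1 - 1 / (phi z * phi t))))"
    by simp
  have "(\<lambda>n. integral\<^sup>L \<mu> (f n)) sums (\<integral>t. - 2 * ln (norm (1 - 1 / (phi z * phi t))) \<partial>\<mu>)"
    by (rule geometric(2)) (use assms(2) in measurable)
  then show "(\<lambda>n. 2 * Re ((1 / phi z) ^ n) / real n * (\<integral>t. Re ((1 / phi t) ^ n) \<partial>\<mu>))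
      sums (- 2 * (\<integral>t. ln (norm (1 - 1 / (phi z * phi t))) \<partial>\<mu>))"
    unfolding f_def[abs_def] q_def by simp
qed

lemma integral_ln_norm_diff_balayage:
  fixes \<mu> \<nu> :: "complex measure"
  assumes "finite_measure \<mu>" "sets \<mu> = sets borel" "AE t in \<mu>. t \<in> real_shell d M" "0 < d"
    and "finite_measure \<nu>" "sets \<nu> = sets borel" "AE t in \<nu>. t \<in> E_int" "measure \<nu> (space \<nu>) = 1"
    and "\<forall>x\<in>E_int. log_potential \<nu> x = log_potential \<mu> x + c"
    and z: "z \<notin> E_int"
  shows "(\<integral>t. ln (norm (z - t)) \<partial>\<nu>) =
    ln (norm (phi z)) - ln 2 + 2 * (\<integral>t. ln (norm (1 - 1 / (phi z * phi t))) \<partial>\<mu>)"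
proof -
  have moments: "(\<lambda>n. 2 * Re ((1 / phi z) ^ n) / real n * integral\<^sup>L \<nu> (chebyshev_T n)) =
      (\<lambda>n. 2 * Re ((1 / phi z) ^ n) / real n * (\<integral>t. Re ((1 / phi t) ^ n) \<partial>\<mu>))"
  proof
    show "2 * Re ((1 / phi z) ^ n) / real n * integral\<^sup>L \<nu> (chebyshev_T n) =
        2 * Re ((1 / phi z) ^ n) / real n * (\<integral>t. Re ((1 / phi t) ^ n) \<partial>\<mu>)" for n
      using chebyshev_moment_balayage[OF assms(1-7,9), of n] by (cases "n = 0") simp_all
  qed
  have "(\<lambda>n. 2 * Re ((1 / phi z) ^ n) / real n * (\<integral>t. Re ((1 / phi t) ^ n) \<partial>\<mu>)) sums
      (ln (norm (phi z)) - ln 2 - (\<integral>t. ln (norm (z - t)) \<partial>\<nu>))"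
    using ln_norm_diff_chebyshev_sums[OF assms(5-7) z] unfolding moments assms(8) by simp
  with integral_ln_norm_one_minus_inverse_phi_sums[OF assms(1-4) z] show ?thesis
    using sums_unique2 by fastforce
qed

lemma v_pot_eq:
  fixes \<mu> :: "complex measure"
  assumes "prob_space \<mu>" and sets_\<mu> [measurable_cong]: "sets \<mu> = sets borel"
    and "AE t in \<mu>. t \<in> real_shell d M" "0 < d"
    and z: "z \<notin> E_int"
  shows "v_pot \<mu> z = ln (norm (phi z)) + (\<integral>t. ln (norm (phi t)) \<partial>\<mu>) +
    (\<integral>t. ln (norm (1 - 1 / (phi z * phi t))) \<partial>\<mu>)"
proof -
  interpret prob_space \<mu>
    by fact
  have "ln (norm (1 - phi z * phi t)) = ln (norm (phi z)) + ln (norm (phi t)) + ln (norm (1 - 1 / (phi z * phi t)))"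
    for t
  proof -
    have "1 - 1 / (phi z * phi t) \<noteq> 0"
      using norm_inverse_phi_mult_lt_1[OF z, of t] by auto
    moreover have "1 - phi z * phi t = - (phi z * phi t) * (1 - 1 / (phi z * phi t))"
      using phi_nonzero[of z] phi_nonzero[of t] by (simp add: field_simps)
    ultimately show ?thesis
      using phi_nonzero[of z] phi_nonzero[of t] by (simp add: norm_mult ln_mult)
  qed
  moreover have "integrable \<mu> (\<lambda>t. ln (norm (phi t)))"
    using assms(3)
    by (intro integrable_const_bound[where B="ln (2 * M)"])
      (auto elim!: eventually_mono intro: ln_norm_phi_real_shell_le \<open>0 < d\<close>)
  moreover have "integrable \<mu> (\<lambda>t. ln (norm (1 - 1 / (phi z * phi t))))"
    using assms(2-4) z by (intro integrable_ln_norm_one_minus_inverse_phi) (simp_all add: finite_measure_axioms)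
  ultimately show ?thesis
    unfolding v_pot_def by (simp add: prob_space)
qed

lemma balayage_onto_E_int:
  fixes \<mu> \<nu> :: "complex measure"
  assumes "balayage_onto E_int \<mu> \<nu>" "prob_space \<mu>" "sets \<mu> = sets borel"
  shows "finite_measure \<nu>" "sets \<nu> = sets borel" "AE t in \<nu>. t \<in> E_int" "measure \<nu> (space \<nu>) = 1"
proof -
  show "finite_measure \<nu>" and sets: "sets \<nu> = sets borel"
    using assms(1) unfolding balayage_onto_def by auto
  have "UNIV - E_int \<in> null_sets \<nu>"
    using assms(1) sets unfolding balayage_onto_def by (auto simp: null_sets_def)
  then show "AE t in \<nu>. t \<in> E_int"
    by (rule AE_I') auto
  have "emeasure \<nu> (space \<nu>) = 1"
    using assms sets_eq_imp_space_eq[OF sets] sets_eq_imp_space_eq[OF assms(3)]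
      prob_space.emeasure_space_1[OF assms(2)]
    unfolding balayage_onto_def by auto
  then show "measure \<nu> (space \<nu>) = 1"
    by (simp add: measure_def)
qed

theorem lemma2:
  fixes F :: "real set" and \<mu> \<nu> :: "complex measure"
  assumes "compact F"
    and "F \<inter> {-1..1} = {}"
    and "prob_space \<mu>"
    and "sets \<mu> = sets borel"
    and "AE t in \<mu>. t \<in> complex_of_real ` F"
    and "balayage_onto E_int \<mu> \<nu>"
  shows "\<exists>C. \<forall>z. z \<notin> E_int \<longrightarrow>
           v_pot \<mu> z = - (1/2) * log_potential (measure_add \<nu> tau_E) z + C"
proof -
  obtain d M where "0 < d" and F: "of_real ` F \<subseteq> real_shell d M"
    using compact_outside_interval_subset_real_shell[OF assms(1,2)] .
  have \<mu>: "finite_measure \<mu>" "AE t in \<mu>. t \<in> real_shell d M"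
    using assms(3,5) F by (auto elim!: eventually_mono intro: prob_space.finite_measure)
  note \<nu> = balayage_onto_E_int[OF assms(6,3,4)]
  obtain c where potentials: "\<forall>x\<in>E_int. log_potential \<nu> x = log_potential \<mu> x + c"
    using assms(6) unfolding balayage_onto_def by blast
  have "v_pot \<mu> z = - (1/2) * log_potential (measure_add \<nu> tau_E) z + (ln 2 + (\<integral>t. ln (norm (phi t)) \<partial>\<mu>))"
    if z: "z \<notin> E_int" for z
  proof -
    have "log_potential (measure_add \<nu> tau_E) z = log_potential \<nu> z + log_potential tau_E z"
      using \<nu>(2) integrable_ln_norm_diff_E[OF \<nu>(1-3) z] integrable_ln_inverse_norm_diff_tau_E[OF z]
      by (intro log_potential_measure_add) (simp_all add: ln_inverse flip: inverse_eq_divide)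
    then show ?thesis
      using integral_ln_norm_diff_balayage[OF \<mu>(1) assms(4) \<mu>(2) \<open>0 < d\<close> \<nu> potentials z]
        v_pot_eq[OF assms(3,4) \<mu>(2) \<open>0 < d\<close> z]
      by (simp add: log_potential_eq_neg_integral[of \<nu>] log_potential_tau_E[OF z]) (simp add: field_simps)
  qed
  then show ?thesis
    by blast
qed

end
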